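(* Let $\mathcal{H}_A=\bigoplus_{k=1}^K\mathcal{H}_{k,1}\otimes\mathcal{H}_{k,2}$, let $\delta_k$ be positive definite states on $\mathcal{H}_{k,2}$, $d_k=\dim\mathcal{H}_{k,1}$, $d=\dim\mathcal{H}_A$, and let $\mathcal{P}(X)=\bigoplus_k\mathrm{Tr}_2(P_kXP_k)\otimes\delta_k$, where $P_k$ is the orthogonal projection onto $\mathcal{H}_{k,1}\otimes\mathcal{H}_{k,2}$ and $\mathrm{Tr}_2$ is the partial trace over $\mathcal{H}_{k,2}$. Then, with suprema over pure states $\psi_{RA}$ with $d_R=d$ and over classical-quantum states $\rho_{MA}=\sum_mp(m)|m\rangle\langle m|_M\otimes\rho^m_A$, and infima over states $\sigma_A$: \begin{align*} \sup_{\psi_{RA}}\inf_{\sigma_A}D_{\max}\big((\mathrm{id}\otimes\mathcal{P})(\psi_{RA})\,\|\,\mathbb 1_R\otimes\sigma_A\big)&\le\log\max_kd_k,\\ \sup_{\rho_{MA}}\inf_{\sigma_A}D_{\max}\big((\mathrm{id}\otimes\mathcal{P})(\rho_{MA})\,\|\,\rho_M\otimes\sigma_A\big)&\le\log\textstyle\sum_kd_k,\\ \sup_{\psi_{RA}}\inf_{\sigma_A}D_{\max}\big((\mathrm{id}\otimes\mathcal{P})(\psi_{RA})\,\|\,\psi_R\otimes\sigma_A\big)&\le\log\textstyle\sum_kd_k^2,\\ \sup_{\psi_{RA}}\inf_{\sigma_{RA}\in\mathrm{SEP}(R:A)}D_{\max}\big((\mathrm{id}\otimes\mathcal{P})(\psi_{RA})\,\|\,\sigma_{RA}\big)&\le\log\max_kd_k.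 \end{align*}
   Context: $D_{\max}(\rho\|\sigma)=\log\inf\{\lambda:\rho\le\lambda\sigma\}$ for positive semidefinite $\rho,\sigma$; $\psi_R,\rho_M$ denote reduced states; $\mathrm{SEP}(R:A)$ is the set of separable states on $\mathcal{H}_R\otimes\mathcal{H}_A$; logarithms base 2. *)

theory Defs
  imports "Jordan_Normal_Form.Matrix" "HOL-Library.Extended_Real" Complex_Main
begin

(* All Hilbert spaces are concrete coordinate spaces C^n; matrices are complex n x n
   matrices (Jordan_Normal_Form).  Tensor product C^m (x) C^n = C^(m*n), basis index
   (i,k) |-> i*n+k (Kronecker ordering). *)

definition qform :: "nat \<Rightarrow> complex mat \<Rightarrow> complex vec \<Rightarrow> complex" where
  "qform n A v = (\<Sum>i<n. \<Sum>j<n. cnj (v $ i) * A $$ (i, j) * v $ j)"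

definition psd :: "nat \<Rightarrow> complex mat \<Rightarrow> bool" where
  "psd n A \<longleftrightarrow> A \<in> carrier_mat n n \<and>
     (\<forall>v\<in>carrier_vec n. Im (qform n A v) = 0 \<and> Re (qform n A v) \<ge> 0)"

definition pd :: "nat \<Rightarrow> complex mat \<Rightarrow> bool" where
  "pd n A \<longleftrightarrow> psd n A \<and> (\<forall>v\<in>carrier_vec n. v \<noteq> 0\<^sub>v n \<longrightarrow> Re (qform n A v) > 0)"

definition tr :: "complex mat \<Rightarrow> complex" where
  "tr A = (\<Sum>i<dim_row A. A $$ (i, i))"

definition states :: "nat \<Rightarrow> complex mat set" where
  "states n = {A. psd n A \<and> tr A = 1}"

definition outer :: "nat \<Rightarrow> complex vec \<Rightarrow> complex mat" where
  "outer n v = mat n n (\<lambda>(i, j). v $ i * cnj (v $ j))"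

definition pure_states :: "nat \<Rightarrow> complex mat set" where
  "pure_states n = {outer n v | v. v \<in> carrier_vec n \<and> (\<Sum>i<n. (cmod (v $ i))\<^sup>2) = 1}"

definition kron :: "complex mat \<Rightarrow> complex mat \<Rightarrow> complex mat" where
  "kron A B = mat (dim_row A * dim_row B) (dim_col A * dim_col B)
     (\<lambda>(i, j). A $$ (i div dim_row B, j div dim_col B) * B $$ (i mod dim_row B, j mod dim_col B))"

definition ptrace2 :: "nat \<Rightarrow> nat \<Rightarrow> complex mat \<Rightarrow> complex mat" where
  "ptrace2 m n X = mat m m (\<lambda>(i, j). \<Sum>k<n. X $$ (i * n + k, j * n + k))"

definition id_tensor :: "nat \<Rightarrow> nat \<Rightarrow> (complex mat \<Rightarrow> complex mat) \<Rightarrow> complex mat \<Rightarrow> complex mat" where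
  "id_tensor m n Phi X = mat (m * n) (m * n)
     (\<lambda>(i, j). Phi (mat n n (\<lambda>(x, y). X $$ ((i div n) * n + x, (j div n) * n + y))) $$ (i mod n, j mod n))"

definition Dmax :: "complex mat \<Rightarrow> complex mat \<Rightarrow> ereal" where
  "Dmax \<rho> \<sigma> =
    (let n = dim_row \<rho>;
         S = {t::real. t \<ge> 0 \<and> psd n (mat n n (\<lambda>(i, j). of_real t * \<sigma> $$ (i, j) - \<rho> $$ (i, j)))}
     in if S = {} then \<infinity> else if Inf S = 0 then -\<infinity> else ereal (log 2 (Inf S)))"

definition ketbra :: "nat \<Rightarrow> nat \<Rightarrow> complex mat" where
  "ketbra n m = mat n n (\<lambda>(i, j). if i = m \<and> j = m then 1 else 0)"

(* classical-quantum states sum_m p(m) |m><m|_M (x) rho^m_A, with |M| = nM arbitrary;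
   pairs (nM, rho_MA) *)
definition cq_states :: "nat \<Rightarrow> (nat \<times> complex mat) set" where
  "cq_states d = {(nM, X) | nM X. \<exists>(p :: nat \<Rightarrow> real) rs.
      (\<forall>m<nM. p m \<ge> 0 \<and> rs m \<in> states d) \<and> (\<Sum>m<nM. p m) = 1 \<and>
      X = mat (nM * d) (nM * d) (\<lambda>(i, j). \<Sum>m<nM. of_real (p m) * kron (ketbra nM m) (rs m) $$ (i, j))}"

definition sep_states :: "nat \<Rightarrow> nat \<Rightarrow> complex mat set" where
  "sep_states dR dA = {X. \<exists>(N :: nat) (c :: nat \<Rightarrow> real) rs ss.
      (\<forall>i<N. c i \<ge> 0 \<and> rs i \<in> states dR \<and> ss i \<in> states dA) \<and> (\<Sum>i<N. c i) = 1 \<and>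
      X = mat (dR * dA) (dR * dA) (\<lambda>(x, y). \<Sum>i<N. of_real (c i) * kron (rs i) (ss i) $$ (x, y))}"

(* H_A = (+)_{k<K} C^(a k) (x) C^(b k); block k occupies indices off k ..< off (Suc k) *)
definition off :: "(nat \<Rightarrow> nat) \<Rightarrow> (nat \<Rightarrow> nat) \<Rightarrow> nat \<Rightarrow> nat" where
  "off a b k = (\<Sum>l<k. a l * b l)"

definition blockP :: "nat \<Rightarrow> (nat \<Rightarrow> nat) \<Rightarrow> (nat \<Rightarrow> nat) \<Rightarrow> (nat \<Rightarrow> complex mat) \<Rightarrow> complex mat \<Rightarrow> complex mat" where
  "blockP K a b \<delta> X = mat (off a b K) (off a b K) (\<lambda>(i, j).
     \<Sum>k<K. if off a b k \<le> i \<and> i < off a b (Suc k) \<and> off a b k \<le> j \<and> j < off a b (Suc k)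
       then kron (ptrace2 (a k) (b k)
                    (mat (a k * b k) (a k * b k) (\<lambda>(x, y). X $$ (off a b k + x, off a b k + y))))
                 (\<delta> k) $$ (i - off a b k, j - off a b k)
       else 0)"

end

(*
  Each bound is a Loewner inequality (id \<otimes> P)(\<rho>) \<le> c \<sigma>' for an explicit comparison state \<sigma>',
  checked on quadratic forms. For a test vector w, <w|(id \<otimes> P)(X)|w> splits over the blocks as
  \<Sum>_k \<Sum>_{x,y} \<tau>_k(x,y) <w_{k,x}|\<delta>_k|w_{k,y}>, where \<tau>_k is the partial trace of the k-th
  diagonal block of X. For a pure state this becomes \<Sum>_{k,l} <Z_{kl}|\<delta>_k|Z_{kl}>, where each Z_{kl}
  is a sum of a_k vectors, and Cauchy-Schwarz in the \<delta>_k-inner product trades the cross terms for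
  a factor a_k. Comparing with \<sigma>_c = \<Oplus>_k c_k 1 \<otimes> \<delta>_k for weights c_k proportional to
  (weight of \<psi> in block k)/a_k, resp. a_k, gives max_k a_k and \<Sum>_k a_k^2; the separable bound
  uses \<Sum>_j <j|\<psi>|j>_A \<otimes> P(|j><j|) instead. For cq states no Cauchy-Schwarz is needed:
  \<tau>_k \<le> tr \<tau>_k \<le> 1 already gives P(\<rho>) \<le> \<Oplus>_k 1 \<otimes> \<delta>_k, whence the factor \<Sum>_k a_k.
*)

theory Submission
  imports Defs
begin

section \<open>Sesquilinear forms of matrix kernels\<close>

definition entries :: "complex mat \<Rightarrow> nat \<Rightarrow> nat \<Rightarrow> complex" where "entries A i j = A $$ (i,j)"

definition sesq :: "nat \<Rightarrow> (nat \<Rightarrow> nat \<Rightarrow> complex) \<Rightarrow> (nat \<Rightarrow> complex) \<Rightarrow> (nat \<Rightarrow> complex) \<Rightarrow> complex" where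
  "sesq n M u v = (\<Sum>i<n. \<Sum>j<n. cnj (u i) * M i j * v j)"

definition psd_kernel :: "nat \<Rightarrow> (nat \<Rightarrow> nat \<Rightarrow> complex) \<Rightarrow> bool" where
  "psd_kernel n M \<longleftrightarrow> (\<forall>u. Im (sesq n M u u) = 0 \<and> 0 \<le> Re (sesq n M u u))"

lemma sesq_cong: "(\<And>i. i<n \<Longrightarrow> u i = u' i) \<Longrightarrow> (\<And>i. i<n \<Longrightarrow> v i = v' i) \<Longrightarrow> sesq n M u v = sesq n M u' v'"
  unfolding sesq_def by (intro sum.cong refl) auto

lemma sesq_cong_kernel: "(\<And>i j. i<n \<Longrightarrow> j<n \<Longrightarrow> M i j = M' i j) \<Longrightarrow> sesq n M u v = sesq n M' u v"
  unfolding sesq_def by (intro sum.cong refl) auto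

lemma qform_eq_sesq: "qform n A v = sesq n (entries A) (\<lambda>i. v $ i) (\<lambda>i. v $ i)"
  by (simp add: qform_def sesq_def entries_def)

lemma psd_kernel_of_psd: assumes "psd n A" shows "psd_kernel n (entries A)"
  unfolding psd_kernel_def
proof
  fix u :: "nat \<Rightarrow> complex"
  have "vec n u \<in> carrier_vec n" by simp
  moreover have "qform n A (vec n u) = sesq n (entries A) u u"
    unfolding qform_eq_sesq by (rule sesq_cong) auto
  ultimately show "Im (sesq n (entries A) u u) = 0 \<and> 0 \<le> Re (sesq n (entries A) u u)"
    using assms unfolding psd_def by metis
qed

lemma psd_of_psd_kernel: assumes "A \<in> carrier_mat n n" "psd_kernel n (entries A)" shows "psd n A"
  using assms unfolding psd_def psd_kernel_def qform_eq_sesq by blast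

lemma sesq_sum_left: "finite J \<Longrightarrow> sesq n M (\<lambda>i. \<Sum>j\<in>J. f j i) v = (\<Sum>j\<in>J. sesq n M (f j) v)"
  unfolding sesq_def by (simp add: sum_distrib_left sum_distrib_right sum.swap[of _ J])

lemma sesq_sum_right: "finite J \<Longrightarrow> sesq n M u (\<lambda>i. \<Sum>j\<in>J. f j i) = (\<Sum>j\<in>J. sesq n M u (f j))"
  unfolding sesq_def by (simp add: sum_distrib_left sum_distrib_right sum.swap[of _ J])

lemma sesq_scale_left: "sesq n M (\<lambda>i. c * u i) v = cnj c * sesq n M u v"
  unfolding sesq_def by (simp add: sum_distrib_left mult_ac)

lemma sesq_scale_right: "sesq n M u (\<lambda>i. c * v i) = c * sesq n M u v"
  unfolding sesq_def by (simp add: sum_distrib_left mult_ac)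

lemma sesq_add_left: "sesq n M (\<lambda>i. u i + u' i) v = sesq n M u v + sesq n M u' v"
  unfolding sesq_def by (simp add: sum.distrib algebra_simps)

lemma sesq_add_right: "sesq n M u (\<lambda>i. v i + v' i) = sesq n M u v + sesq n M u v'"
  unfolding sesq_def by (simp add: sum.distrib algebra_simps)

lemma sesq_sum_kernel: "finite J \<Longrightarrow> sesq n (\<lambda>i k. \<Sum>j\<in>J. f j i k) u v = (\<Sum>j\<in>J. sesq n (f j) u v)"
  unfolding sesq_def by (simp add: sum_distrib_left sum_distrib_right sum.swap[of _ J])

lemma sesq_scale_kernel: "sesq n (\<lambda>i k. c * A i k) u v = c * sesq n A u v"
  unfolding sesq_def by (simp add: sum_distrib_left mult_ac)

lemma sesq_scaled_diff_kernel: "sesq n (\<lambda>i j. c * A i j - B i j) u v = c * sesq n A u v - sesq n B u v"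
  unfolding sesq_def by (simp add: sum_subtractf sum_distrib_left algebra_simps)

lemma sesq_expand_add_scaled: "sesq n M (\<lambda>k. u k + c * v k) (\<lambda>k. u k + c * v k)
   = sesq n M u u + c * sesq n M u v + cnj c * sesq n M v u + cnj c * c * sesq n M v v"
  by (simp add: sesq_add_left sesq_add_right sesq_scale_left sesq_scale_right algebra_simps)

lemma if_one_zero_mult[simp]: "(if P then (1::complex) else 0) * x = (if P then x else 0)"
  "x * (if P then (1::complex) else 0) = (if P then x else 0)" by auto

lemma sesq_unit_vectors: assumes "i<n" "j<n"
  shows "sesq n M (\<lambda>k. if k = i then 1 else 0) (\<lambda>k. if k = j then 1 else 0) = M i j"
  using assms unfolding sesq_def by (simp add: if_distrib[of cnj] cong: if_cong)

lemma psd_kernel_hermitian: assumes "psd_kernel n M" "i<n" "j<n" shows "M j i = cnj (M i j)"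
proof -
  let ?e = "\<lambda>i k. if k = i then (1::complex) else 0"
  have R: "Im (sesq n M u u) = 0" for u using assms(1) unfolding psd_kernel_def by blast
  have E: "sesq n M (\<lambda>k. ?e i k + c * ?e j k) (\<lambda>k. ?e i k + c * ?e j k)
     = M i i + c * M i j + cnj c * M j i + cnj c * c * M j j" for c
    by (simp only: sesq_expand_add_scaled sesq_unit_vectors[OF assms(2) assms(2)] sesq_unit_vectors[OF assms(2) assms(3)]
      sesq_unit_vectors[OF assms(3) assms(2)] sesq_unit_vectors[OF assms(3) assms(3)])
  have ii: "Im (M i i) = 0" using R[of "?e i"] unfolding sesq_unit_vectors[OF assms(2) assms(2)] .
  have jj: "Im (M j j) = 0" using R[of "?e j"] unfolding sesq_unit_vectors[OF assms(3) assms(3)] .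
  have "Im (M i i + 1 * M i j + cnj 1 * M j i + cnj 1 * 1 * M j j) = 0"
    using R[of "\<lambda>k. ?e i k + 1 * ?e j k"] unfolding E .
  hence im: "Im (M i j) + Im (M j i) = 0" using ii jj by simp
  have "Im (M i i + \<i> * M i j + cnj \<i> * M j i + cnj \<i> * \<i> * M j j) = 0"
    using R[of "\<lambda>k. ?e i k + \<i> * ?e j k"] unfolding E .
  hence re: "Re (M i j) - Re (M j i) = 0" using ii jj by simp
  show ?thesis using im re by (simp add: complex_eq_iff)
qed

lemma psd_kernel_sesq_swap: assumes "psd_kernel n M" shows "sesq n M v u = cnj (sesq n M u v)"
proof -
  have "sesq n M v u = (\<Sum>i<n. \<Sum>j<n. cnj (v i) * M i j * u j)" by (simp add: sesq_def)
  also have "\<dots> = (\<Sum>j<n. \<Sum>i<n. cnj (cnj (u j) * M j i * v i))"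
  proof (subst sum.swap, intro sum.cong refl)
    fix i j assume "i \<in> {..<n}" "j \<in> {..<n}"
    hence "M i j = cnj (M j i)" using psd_kernel_hermitian[OF assms, of j i] by simp
    thus "cnj (v i) * M i j * u j = cnj (cnj (u j) * M j i * v i)" by (simp add: mult_ac)
  qed
  also have "\<dots> = cnj (sesq n M u v)" by (simp add: sesq_def)
  finally show ?thesis .
qed

lemma psd_kernel_sesq_real: "psd_kernel n M \<Longrightarrow> sesq n M u u = complex_of_real (Re (sesq n M u u))"
  unfolding psd_kernel_def by (simp add: complex_eq_iff)

lemma psd_kernel_sesq_nonneg: "psd_kernel n M \<Longrightarrow> 0 \<le> Re (sesq n M u u)"
  unfolding psd_kernel_def by blast

lemma quadratic_nonneg_imp_le:
  fixes A B C :: real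
  assumes Q: "\<And>t. 0 \<le> A - 2 * t * B + t\<^sup>2 * B * C" and "0 \<le> B" "0 \<le> C"
  shows "B \<le> A * C"
proof (cases "C > 0")
  case True
  have "0 \<le> A - 2 * (1/C) * B + (1/C)\<^sup>2 * B * C" by (rule Q)
  hence "0 \<le> A - B / C" using True by (simp add: power2_eq_square)
  thus ?thesis using True by (simp add: field_simps)
next
  case False
  hence C: "C = 0" using assms(3) by simp
  have "B = 0"
  proof (rule ccontr)
    assume "B \<noteq> 0"
    hence B: "0 < B" using assms(2) by simp
    have "0 \<le> A - 2 * ((A + 1) / (2 * B)) * B" using Q[of "(A + 1) / (2 * B)"] C by simp
    thus False using B by simp
  qed
  thus ?thesis using C by simp
qed

lemma psd_kernel_cauchy_schwarz: assumes P: "psd_kernel n M"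
  shows "(cmod (sesq n M u v))\<^sup>2 \<le> Re (sesq n M u u) * Re (sesq n M v v)"
proof (rule quadratic_nonneg_imp_le)
  define B where "B = sesq n M u v"
  fix t :: real
  define c where "c = - complex_of_real t * cnj B"
  have BB: "B * cnj B = complex_of_real ((cmod B)\<^sup>2)"
    by (metis complex_norm_square of_real_power)
  have "sesq n M (\<lambda>k. u k + c * v k) (\<lambda>k. u k + c * v k)
      = sesq n M u u - 2 * complex_of_real t * (B * cnj B)
        + (complex_of_real t)\<^sup>2 * (B * cnj B) * sesq n M v v"
    unfolding sesq_expand_add_scaled psd_kernel_sesq_swap[OF P, of v u] c_def B_def[symmetric]
    by (simp add: power2_eq_square algebra_simps)
  also have "\<dots> = sesq n M u u - complex_of_real (2 * t * (cmod B)\<^sup>2)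
        + complex_of_real (t\<^sup>2 * (cmod B)\<^sup>2 * Re (sesq n M v v))"
    unfolding BB by (subst psd_kernel_sesq_real[OF P, of v]) simp
  finally show "0 \<le> Re (sesq n M u u) - 2 * t * (cmod B)\<^sup>2 + t\<^sup>2 * (cmod B)\<^sup>2 * Re (sesq n M v v)"
    using psd_kernel_sesq_nonneg[OF P, of "\<lambda>k. u k + c * v k"] by simp
qed (use psd_kernel_sesq_nonneg[OF P] in auto)

lemma psd_kernel_cauchy_schwarz_sqrt: assumes "psd_kernel n M"
  shows "cmod (sesq n M u v) \<le> sqrt (Re (sesq n M u u)) * sqrt (Re (sesq n M v v))"
proof -
  have "cmod (sesq n M u v) = sqrt ((cmod (sesq n M u v))\<^sup>2)" by simp
  also have "\<dots> \<le> sqrt (Re (sesq n M u u) * Re (sesq n M v v))" by (rule real_sqrt_le_mono[OF psd_kernel_cauchy_schwarz[OF assms]])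
  also have "\<dots> = sqrt (Re (sesq n M u u)) * sqrt (Re (sesq n M v v))" by (simp add: real_sqrt_mult)
  finally show ?thesis .
qed

lemma cauchy_schwarz_sum: fixes a b :: "'a \<Rightarrow> real"
  shows "(\<Sum>i\<in>I. a i * b i)\<^sup>2 \<le> (\<Sum>i\<in>I. (a i)\<^sup>2) * (\<Sum>i\<in>I. (b i)\<^sup>2)"
proof -
  have "0 \<le> (\<Sum>i\<in>I. \<Sum>j\<in>I. (a i * b j - a j * b i)\<^sup>2)" by (intro sum_nonneg) auto
  also have "\<dots> = (\<Sum>i\<in>I. \<Sum>j\<in>I. (a i)\<^sup>2 * (b j)\<^sup>2) + (\<Sum>i\<in>I. \<Sum>j\<in>I. (a j)\<^sup>2 * (b i)\<^sup>2)
      - 2 * (\<Sum>i\<in>I. \<Sum>j\<in>I. (a i * b i) * (a j * b j))"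
    by (simp add: power2_eq_square algebra_simps sum.distrib sum_subtractf sum_distrib_left)
  also have "(\<Sum>i\<in>I. \<Sum>j\<in>I. (a i)\<^sup>2 * (b j)\<^sup>2) = (\<Sum>i\<in>I. (a i)\<^sup>2) * (\<Sum>i\<in>I. (b i)\<^sup>2)"
    by (simp add: sum_product)
  also have "(\<Sum>i\<in>I. \<Sum>j\<in>I. (a j)\<^sup>2 * (b i)\<^sup>2) = (\<Sum>i\<in>I. (a i)\<^sup>2) * (\<Sum>i\<in>I. (b i)\<^sup>2)"
    by (subst sum.swap) (simp add: sum_product mult.commute)
  also have "(\<Sum>i\<in>I. \<Sum>j\<in>I. (a i * b i) * (a j * b j)) = (\<Sum>i\<in>I. a i * b i)\<^sup>2"
    by (simp add: sum_product power2_eq_square)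
  finally show ?thesis by simp
qed

lemma psd_kernel_sesq_lincomb_le: assumes P: "psd_kernel n M" and J: "finite J"
  shows "Re (sesq n M (\<lambda>i. \<Sum>j\<in>J. c j * f j i) (\<lambda>i. \<Sum>j\<in>J. c j * f j i))
    \<le> (\<Sum>j\<in>J. (cmod (c j))\<^sup>2) * (\<Sum>j\<in>J. Re (sesq n M (f j) (f j)))"
proof -
  define A where "A j = Re (sesq n M (f j) (f j))" for j
  have A0: "0 \<le> A j" for j unfolding A_def by (rule psd_kernel_sesq_nonneg[OF P])
  have eq: "sesq n M (\<lambda>i. \<Sum>j\<in>J. c j * f j i) (\<lambda>i. \<Sum>j\<in>J. c j * f j i)
      = (\<Sum>j\<in>J. \<Sum>j'\<in>J. cnj (c j) * c j' * sesq n M (f j) (f j'))"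
    using J by (simp add: sesq_sum_left sesq_sum_right sesq_scale_left sesq_scale_right sum_distrib_left mult.assoc)
  have "Re (sesq n M (\<lambda>i. \<Sum>j\<in>J. c j * f j i) (\<lambda>i. \<Sum>j\<in>J. c j * f j i))
      \<le> cmod (\<Sum>j\<in>J. \<Sum>j'\<in>J. cnj (c j) * c j' * sesq n M (f j) (f j'))"
    unfolding eq by (rule complex_Re_le_cmod)
  also have "\<dots> \<le> (\<Sum>j\<in>J. \<Sum>j'\<in>J. cmod (cnj (c j) * c j' * sesq n M (f j) (f j')))"
    by (rule order_trans[OF norm_sum], intro sum_mono norm_sum)
  also have "\<dots> \<le> (\<Sum>j\<in>J. \<Sum>j'\<in>J. (cmod (c j) * sqrt (A j)) * (cmod (c j') * sqrt (A j')))"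
  proof (intro sum_mono)
    fix j j'
    have "cmod (cnj (c j) * c j' * sesq n M (f j) (f j')) = cmod (c j) * cmod (c j') * cmod (sesq n M (f j) (f j'))"
      by (simp add: norm_mult)
    also have "\<dots> \<le> cmod (c j) * cmod (c j') * (sqrt (A j) * sqrt (A j'))"
      unfolding A_def by (intro mult_left_mono psd_kernel_cauchy_schwarz_sqrt[OF P]) auto
    finally show "cmod (cnj (c j) * c j' * sesq n M (f j) (f j')) \<le> (cmod (c j) * sqrt (A j)) * (cmod (c j') * sqrt (A j'))"
      by (simp add: mult_ac)
  qed
  also have "\<dots> = (\<Sum>j\<in>J. cmod (c j) * sqrt (A j))\<^sup>2"
    by (simp add: sum_product power2_eq_square)
  also have "\<dots> \<le> (\<Sum>j\<in>J. (cmod (c j))\<^sup>2) * (\<Sum>j\<in>J. (sqrt (A j))\<^sup>2)" by (rule cauchy_schwarz_sum)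
  also have "(\<Sum>j\<in>J. (sqrt (A j))\<^sup>2) = (\<Sum>j\<in>J. A j)" using A0 by simp
  finally show ?thesis unfolding A_def .
qed

lemma psd_kernel_sesq_sum_le: assumes P: "psd_kernel n M" and J: "finite J"
  shows "Re (sesq n M (\<lambda>i. \<Sum>j\<in>J. f j i) (\<lambda>i. \<Sum>j\<in>J. f j i))
    \<le> real (card J) * (\<Sum>j\<in>J. Re (sesq n M (f j) (f j)))"
  using psd_kernel_sesq_lincomb_le[OF P J, of "\<lambda>_. 1" f] by simp

lemma psd_kernel_diag: assumes "psd_kernel m T" "x < m" shows "0 \<le> Re (T x x)" "Im (T x x) = 0"
  using psd_kernel_sesq_nonneg[OF assms(1), of "\<lambda>k. if k = x then 1 else 0"] sesq_unit_vectors[OF assms(2) assms(2), of T]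
    assms(1) unfolding psd_kernel_def by metis+

lemma psd_kernel_offdiag_le: assumes "psd_kernel m T" "x < m" "y < m"
  shows "cmod (T x y) \<le> sqrt (Re (T x x)) * sqrt (Re (T y y))"
  using psd_kernel_cauchy_schwarz_sqrt[OF assms(1), of "\<lambda>k. if k = x then 1 else 0" "\<lambda>k. if k = y then 1 else 0"]
  unfolding sesq_unit_vectors[OF assms(2) assms(3)] sesq_unit_vectors[OF assms(2) assms(2)] sesq_unit_vectors[OF assms(3) assms(3)] .

lemma psd_kernel_pairing_le: assumes T: "psd_kernel m T"
  and G: "\<And>x y. x<m \<Longrightarrow> y<m \<Longrightarrow> cmod (G x y) \<le> sqrt (Re (G x x)) * sqrt (Re (G y y))"
  and G0: "\<And>x. x<m \<Longrightarrow> 0 \<le> Re (G x x)"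
  shows "Re (\<Sum>x<m. \<Sum>y<m. T x y * G x y) \<le> (\<Sum>x<m. Re (T x x)) * (\<Sum>x<m. Re (G x x))"
proof -
  define t where "t x = sqrt (Re (T x x)) * sqrt (Re (G x x))" for x
  have "Re (\<Sum>x<m. \<Sum>y<m. T x y * G x y) \<le> cmod (\<Sum>x<m. \<Sum>y<m. T x y * G x y)"
    by (rule complex_Re_le_cmod)
  also have "\<dots> \<le> (\<Sum>x<m. \<Sum>y<m. cmod (T x y * G x y))"
    by (rule order_trans[OF norm_sum], intro sum_mono norm_sum)
  also have "\<dots> \<le> (\<Sum>x<m. \<Sum>y<m. t x * t y)"
  proof (intro sum_mono)
    fix x y assume "x \<in> {..<m}" "y \<in> {..<m}"
    hence xy: "x<m" "y<m" by auto
    have "cmod (T x y * G x y) = cmod (T x y) * cmod (G x y)" by (simp add: norm_mult)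
    also have "\<dots> \<le> (sqrt (Re (T x x)) * sqrt (Re (T y y))) * (sqrt (Re (G x x)) * sqrt (Re (G y y)))"
      by (intro mult_mono psd_kernel_offdiag_le[OF T xy] G[OF xy]) (use psd_kernel_diag(1)[OF T] xy in auto)
    finally show "cmod (T x y * G x y) \<le> t x * t y" unfolding t_def by (simp add: mult_ac)
  qed
  also have "\<dots> = (\<Sum>x<m. sqrt (Re (T x x)) * sqrt (Re (G x x)))\<^sup>2"
    by (simp add: sum_product power2_eq_square t_def)
  also have "\<dots> \<le> (\<Sum>x<m. (sqrt (Re (T x x)))\<^sup>2) * (\<Sum>x<m. (sqrt (Re (G x x)))\<^sup>2)" by (rule cauchy_schwarz_sum)
  also have "\<dots> = (\<Sum>x<m. Re (T x x)) * (\<Sum>x<m. Re (G x x))"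
    using psd_kernel_diag(1)[OF T] G0 by simp
  finally show ?thesis .
qed

lemma hermitian_pairing_real:
  assumes "\<And>x y. x<m \<Longrightarrow> y<m \<Longrightarrow> T y x = cnj (T x y)"
    "\<And>x y. x<m \<Longrightarrow> y<m \<Longrightarrow> G y x = cnj (G x y)"
  shows "Im (\<Sum>x<m. \<Sum>y<m. T x y * G x y) = 0"
proof -
  have "cnj (\<Sum>x<m. \<Sum>y<m. T x y * G x y) = (\<Sum>x<m. \<Sum>y<m. cnj (T x y) * cnj (G x y))"
    by simp
  also have "\<dots> = (\<Sum>x<m. \<Sum>y<m. T y x * G y x)"
    by (intro sum.cong refl) (simp add: assms(1)[symmetric] assms(2)[symmetric])
  also have "\<dots> = (\<Sum>x<m. \<Sum>y<m. T x y * G x y)" by (rule sum.swap)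
  finally have "cnj (\<Sum>x<m. \<Sum>y<m. T x y * G x y) = (\<Sum>x<m. \<Sum>y<m. T x y * G x y)" .
  thus ?thesis by (rule complex_is_Real_iff[THEN iffD1, OF Reals_cnj_iff[THEN iffD2]])
qed

section \<open>Special states and the max-relative entropy\<close>

lemma mult_cnj_cmod: "z * cnj z = (complex_of_real (cmod z))\<^sup>2"
  by (metis complex_norm_square of_real_power)

definition diag_mat :: "nat \<Rightarrow> (nat \<Rightarrow> real) \<Rightarrow> complex mat" where
  "diag_mat d z = mat d d (\<lambda>(i,j). if i = j then complex_of_real (z i) else 0)"

lemma sesq_diag_mat: "sesq n (entries (diag_mat n z)) u u = complex_of_real (\<Sum>i<n. z i * (cmod (u i))\<^sup>2)"
proof -
  have "sesq n (entries (diag_mat n z)) u u = (\<Sum>i<n. \<Sum>j<n. if i = j then cnj (u i) * complex_of_real (z i) * u j else 0)"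
    unfolding sesq_def entries_def diag_mat_def by (intro sum.cong refl) auto
  also have "\<dots> = (\<Sum>i<n. complex_of_real (z i) * (cnj (u i) * u i))"
    by (simp add: mult_ac)
  also have "\<dots> = complex_of_real (\<Sum>i<n. z i * (cmod (u i))\<^sup>2)"
  proof -
    have "cnj (u i) * u i = complex_of_real ((cmod (u i))\<^sup>2)" for i
      by (metis complex_norm_square mult.commute of_real_power)
    thus ?thesis unfolding of_real_sum by simp
  qed
  finally show ?thesis .
qed

lemma tr_diag_mat: "tr (diag_mat n z) = complex_of_real (\<Sum>i<n. z i)"
  unfolding tr_def diag_mat_def by simp

lemma diag_mat_states: assumes "\<forall>i<n. 0 \<le> z i" "(\<Sum>i<n. z i) = 1" shows "diag_mat n z \<in> states n"
proof -
  have "psd n (diag_mat n z)"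
  proof (rule psd_of_psd_kernel)
    show "diag_mat n z \<in> carrier_mat n n" by (simp add: diag_mat_def)
    show "psd_kernel n (entries (diag_mat n z))" unfolding psd_kernel_def sesq_diag_mat using assms(1)
      by (auto intro!: sum_nonneg)
  qed
  thus ?thesis unfolding states_def using assms(2) by (simp add: tr_diag_mat)
qed

lemma ketbra_eq_diag_mat: "ketbra d j = diag_mat d (\<lambda>i. if i = j then 1 else 0)"
  unfolding ketbra_def diag_mat_def by (rule cong[of "mat d d", OF refl]) (auto simp: fun_eq_iff)

lemma sesq_rank_one: "sesq n (entries (mat n n (\<lambda>(r,s). \<alpha> r * cnj (\<alpha> s) / complex_of_real c))) u u
   = complex_of_real ((cmod (\<Sum>r<n. cnj (u r) * \<alpha> r))\<^sup>2 / c)"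
proof -
  define z where "z = (\<Sum>r<n. cnj (u r) * \<alpha> r)"
  have "sesq n (entries (mat n n (\<lambda>(r,s). \<alpha> r * cnj (\<alpha> s) / complex_of_real c))) u u
     = sesq n (\<lambda>r s. \<alpha> r * cnj (\<alpha> s) / complex_of_real c) u u"
    by (rule sesq_cong_kernel) (simp add: entries_def)
  also have "\<dots> = z * cnj z / complex_of_real c"
    unfolding sesq_def z_def by (simp add: sum_distrib_left sum_distrib_right sum_divide_distrib mult_ac) (rule sum.swap)
  also have "\<dots> = complex_of_real ((cmod z)\<^sup>2 / c)" by (simp add: mult_cnj_cmod)
  finally show ?thesis unfolding z_def .
qed

lemma rank_one_states: assumes c: "c = (\<Sum>r<n. (cmod (\<alpha> r))\<^sup>2)" "c \<noteq> 0"
  shows "mat n n (\<lambda>(r,s). \<alpha> r * cnj (\<alpha> s) / complex_of_real c) \<in> states n"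
proof -
  have c0: "0 < c" using c by (metis (no_types, lifting) sum_nonneg zero_le_power2 order_le_less)
  have "psd n (mat n n (\<lambda>(r,s). \<alpha> r * cnj (\<alpha> s) / complex_of_real c))"
    by (rule psd_of_psd_kernel) (use c0 in \<open>auto simp: psd_kernel_def sesq_rank_one\<close>)
  moreover have "tr (mat n n (\<lambda>(r,s). \<alpha> r * cnj (\<alpha> s) / complex_of_real c)) = 1"
  proof -
    have "tr (mat n n (\<lambda>(r,s). \<alpha> r * cnj (\<alpha> s) / complex_of_real c)) = (\<Sum>r<n. \<alpha> r * cnj (\<alpha> r)) / complex_of_real c"
      unfolding tr_def by (simp add: sum_divide_distrib)
    also have "(\<Sum>r<n. \<alpha> r * cnj (\<alpha> r)) = complex_of_real c"
      unfolding c(1) of_real_sum by (intro sum.cong refl) (simp add: mult_cnj_cmod)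
    finally show ?thesis using c0 by simp
  qed
  ultimately show ?thesis unfolding states_def by simp
qed

lemma outer_index: "i < n \<Longrightarrow> j < n \<Longrightarrow> outer n v $$ (i,j) = v $ i * cnj (v $ j)"
  by (simp add: outer_def)

lemma pure_statesE: assumes "\<psi> \<in> pure_states n"
  obtains v where "\<psi> = outer n v" "v \<in> carrier_vec n" "(\<Sum>i<n. (cmod (v $ i))\<^sup>2) = 1"
  using assms unfolding pure_states_def by blast

lemma states_dim_pos: "X \<in> states n \<Longrightarrow> 0 < n"
  unfolding states_def psd_def by (cases n) (auto simp: tr_def)

lemma Dmax_le_log: assumes c: "0 < c"
  and P: "psd (dim_row \<rho>) (mat (dim_row \<rho>) (dim_row \<rho>) (\<lambda>(i,j). complex_of_real c * \<sigma> $$ (i,j) - \<rho> $$ (i,j)))"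
  shows "Dmax \<rho> \<sigma> \<le> ereal (log 2 c)"
proof -
  define n where "n = dim_row \<rho>"
  define S where "S = {t::real. t \<ge> 0 \<and> psd n (mat n n (\<lambda>(i, j). of_real t * \<sigma> $$ (i, j) - \<rho> $$ (i, j)))}"
  have cS: "c \<in> S" unfolding S_def n_def using c P by simp
  have bdd: "bdd_below S" unfolding S_def by (rule bdd_belowI[of _ 0]) auto
  have le: "Inf S \<le> c" by (rule cInf_lower[OF cS bdd])
  have ge: "0 \<le> Inf S" by (rule cInf_greatest) (use cS in \<open>auto simp: S_def\<close>)
  have D: "Dmax \<rho> \<sigma> = (if S = {} then \<infinity> else if Inf S = 0 then -\<infinity> else ereal (log 2 (Inf S)))"
    unfolding Dmax_def Let_def S_def n_def ..
  show ?thesis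
  proof (cases "Inf S = 0")
    case True thus ?thesis unfolding D using cS by auto
  next
    case False
    hence "0 < Inf S" using ge by simp
    hence "log 2 (Inf S) \<le> log 2 c" using le c by simp
    thus ?thesis unfolding D using cS False by auto
  qed
qed

lemma psd_scaled_diff: assumes n: "dim_row \<rho> = n"
  and I1: "\<And>w. Im (sesq n (entries \<sigma>) w w) = 0" and I2: "\<And>w. Im (sesq n (entries \<rho>) w w) = 0"
  and R: "\<And>w. Re (sesq n (entries \<rho>) w w) \<le> c * Re (sesq n (entries \<sigma>) w w)"
  shows "psd (dim_row \<rho>) (mat (dim_row \<rho>) (dim_row \<rho>) (\<lambda>(i,j). complex_of_real c * \<sigma> $$ (i,j) - \<rho> $$ (i,j)))"
  unfolding n
proof (rule psd_of_psd_kernel)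
  show "mat n n (\<lambda>(i,j). complex_of_real c * \<sigma> $$ (i,j) - \<rho> $$ (i,j)) \<in> carrier_mat n n" by simp
  have e: "sesq n (entries (mat n n (\<lambda>(i,j). complex_of_real c * \<sigma> $$ (i,j) - \<rho> $$ (i,j)))) w w
     = complex_of_real c * sesq n (entries \<sigma>) w w - sesq n (entries \<rho>) w w" for w
  proof -
    have "sesq n (entries (mat n n (\<lambda>(i,j). complex_of_real c * \<sigma> $$ (i,j) - \<rho> $$ (i,j)))) w w
       = sesq n (\<lambda>i j. complex_of_real c * entries \<sigma> i j - entries \<rho> i j) w w"
      by (rule sesq_cong_kernel) (simp add: entries_def)
    thus ?thesis by (simp add: sesq_scaled_diff_kernel)
  qed
  show "psd_kernel n (entries (mat n n (\<lambda>(i,j). complex_of_real c * \<sigma> $$ (i,j) - \<rho> $$ (i,j))))"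
    unfolding psd_kernel_def e using I1 I2 R by simp
qed

lemma Dmax_le_log_of_sesq_le:
  assumes "0 < c" and "dim_row \<rho> = n"
    and "\<And>w. Im (sesq n (entries \<sigma>) w w) = 0" and "\<And>w. Im (sesq n (entries \<rho>) w w) = 0"
    and "\<And>w. Re (sesq n (entries \<rho>) w w) \<le> c * Re (sesq n (entries \<sigma>) w w)"
  shows "Dmax \<rho> \<sigma> \<le> ereal (log 2 c)"
  by (rule Dmax_le_log[OF assms(1) psd_scaled_diff[OF assms(2-5)]])

section \<open>Tensor products and block indices\<close>

lemma sum_lessThan_add: "(\<Sum>i<(A::nat)+B. f i) = (\<Sum>i<A. f i) + (\<Sum>i<B. f (A+i))"
  by (induct B) (auto simp: add.assoc)

lemma sum_lessThan_mult: "(\<Sum>i<(A::nat)*B. f i) = (\<Sum>x<A. \<Sum>y<B. f (x*B + y))"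
proof (induct A)
  case (Suc A)
  have "(\<Sum>i<Suc A*B. f i) = (\<Sum>i<A*B + B. f i)" by (simp add: add.commute)
  also have "\<dots> = (\<Sum>i<A*B. f i) + (\<Sum>y<B. f (A*B+y))" by (rule sum_lessThan_add)
  finally show ?case using Suc by simp
qed simp

lemma sum_swap_outer3: "(\<Sum>i\<in>I. \<Sum>j\<in>J. \<Sum>k\<in>L. F k i j) = (\<Sum>k\<in>L. \<Sum>i\<in>I. \<Sum>j\<in>J. F k i j)"
proof -
  have "(\<Sum>i\<in>I. \<Sum>j\<in>J. \<Sum>k\<in>L. F k i j) = (\<Sum>i\<in>I. \<Sum>k\<in>L. \<Sum>j\<in>J. F k i j)"
    by (intro sum.cong refl) (rule sum.swap)
  also have "\<dots> = (\<Sum>k\<in>L. \<Sum>i\<in>I. \<Sum>j\<in>J. F k i j)" by (rule sum.swap)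
  finally show ?thesis .
qed

lemma sum_swap_middle: "(\<Sum>r\<in>A. \<Sum>i\<in>B. \<Sum>s\<in>C. \<Sum>j\<in>D. F r i s j) = (\<Sum>r\<in>A. \<Sum>s\<in>C. \<Sum>i\<in>B. \<Sum>j\<in>D. F r i s j)"
  by (intro sum.cong refl) (rule sum.swap)

lemma sum_if_const_cond: "(\<Sum>j\<in>J. if P then f j else 0) = (if P then (\<Sum>j\<in>J. f j) else 0)"
  by auto

lemma sum_if_eq_lessThan: "(\<Sum>j<(d::nat). if e = j then h j else (0::'a::comm_monoid_add)) = (if e < d then h e else 0)"
  by (induct d) auto

lemma sum_indicator_pick:
  shows "(\<Sum>j<(d::nat). complex_of_real (\<Sum>l<B. if f l = j then 1 else 0) * g j) = (\<Sum>l<B. if f l < d then g (f l) else 0)"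
proof -
  have "(\<Sum>j<d. complex_of_real (\<Sum>l<B. if f l = j then 1 else 0) * g j) = (\<Sum>j<d. \<Sum>l<B. if f l = j then g j else 0)"
    by (simp only: of_real_sum sum_distrib_right) (intro sum.cong refl, auto)
  also have "\<dots> = (\<Sum>l<B. \<Sum>j<d. if f l = j then g j else 0)" by (rule sum.swap)
  also have "\<dots> = (\<Sum>l<B. if f l < d then g (f l) else 0)"
    by (rule sum.cong[OF refl]) (rule sum_if_eq_lessThan)
  finally show ?thesis .
qed

lemma sum_if_eq_diag: "(\<Sum>m1<(n::nat). \<Sum>m2<n. if m1 = m2 then f m1 else (0::'a::comm_monoid_add)) = (\<Sum>m<n. f m)"
  by (rule sum.cong[OF refl]) (simp add: sum_if_eq_lessThan[of n])

lemma mult_add_less_mult: "x < (A::nat) \<Longrightarrow> l < B \<Longrightarrow> x * B + l < A * B"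
proof -
  assume "x < A" "l < B"
  hence "x * B + l < x * B + B" by simp
  also have "\<dots> = Suc x * B" by simp
  also have "\<dots> \<le> A * B" using \<open>x < A\<close> by (intro mult_le_mono1) simp
  finally show ?thesis .
qed

lemma kron_index: assumes "dim_row A = m" "dim_col A = m" "dim_row B = n" "dim_col B = n"
  "x<m" "y<m" "x2<n" "y2<n"
  shows "kron A B $$ (x*n+x2, y*n+y2) = A $$ (x,y) * B $$ (x2,y2)"
  using assms mult_add_less_mult[of x m x2 n] mult_add_less_mult[of y m y2 n]
  unfolding kron_def by simp

lemma ptrace2_index: "x<m \<Longrightarrow> y<m \<Longrightarrow> ptrace2 m n X $$ (x,y) = (\<Sum>l<n. X $$ (x*n+l, y*n+l))"
  by (simp add: ptrace2_def)

lemma sesq_kron: assumes "A \<in> carrier_mat m m" "B \<in> carrier_mat n n"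
  shows "sesq (m*n) (entries (kron A B)) w w' = (\<Sum>r<m. \<Sum>s<m. A $$ (r,s) * sesq n (entries B) (\<lambda>i. w (r*n+i)) (\<lambda>i. w' (s*n+i)))"
proof -
  have "sesq (m*n) (entries (kron A B)) w w'
     = (\<Sum>r<m. \<Sum>i<n. \<Sum>s<m. \<Sum>j<n. cnj (w (r*n+i)) * (A $$ (r,s) * B $$ (i,j)) * w' (s*n+j))"
    unfolding sesq_def sum_lessThan_mult entries_def
    by (intro sum.cong refl) (use assms in \<open>simp add: kron_index\<close>)
  also have "\<dots> = (\<Sum>r<m. \<Sum>s<m. A $$ (r,s) * sesq n (entries B) (\<lambda>i. w (r*n+i)) (\<lambda>i. w' (s*n+i)))"
    by (subst sum_swap_middle) (simp add: sesq_def entries_def sum_distrib_left mult_ac)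
  finally show ?thesis .
qed

lemma sesq_kron_one: assumes "B \<in> carrier_mat n n"
  shows "sesq (m*n) (entries (kron (1\<^sub>m m) B)) w w = (\<Sum>r<m. sesq n (entries B) (\<lambda>i. w (r*n+i)) (\<lambda>i. w (r*n+i)))"
proof -
  have "sesq (m*n) (entries (kron (1\<^sub>m m) B)) w w
     = (\<Sum>r<m. \<Sum>s<m. 1\<^sub>m m $$ (r,s) * sesq n (entries B) (\<lambda>i. w (r*n+i)) (\<lambda>i. w (s*n+i)))"
    by (rule sesq_kron[OF one_carrier_mat assms])
  also have "\<dots> = (\<Sum>r<m. sesq n (entries B) (\<lambda>i. w (r*n+i)) (\<lambda>i. w (r*n+i)))"
    by (rule sum.cong[OF refl]) simp
  finally show ?thesis .
qed

lemma id_tensor_index: assumes "r<n" "s<n" "i<d" "j<d"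
  shows "id_tensor n d Phi X $$ (r*d+i, s*d+j) = Phi (mat d d (\<lambda>(x,y). X $$ (r*d+x, s*d+y))) $$ (i,j)"
proof -
  have 1: "r*d+i < n*d" "s*d+j < n*d" using assms mult_add_less_mult by auto
  have 2: "(r*d+i) div d = r" "(r*d+i) mod d = i" "(s*d+j) div d = s" "(s*d+j) mod d = j"
    using assms(3,4) by simp_all
  show ?thesis unfolding id_tensor_def index_mat(1)[OF 1] using 2 by simp
qed

lemma sesq_id_tensor: "sesq (n*d) (entries (id_tensor n d Phi X)) w w'
   = (\<Sum>r<n. \<Sum>s<n. sesq d (entries (Phi (mat d d (\<lambda>(x,y). X $$ (r*d+x, s*d+y))))) (\<lambda>i. w (r*d+i)) (\<lambda>i. w' (s*d+i)))"
proof -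
  have "sesq (n*d) (entries (id_tensor n d Phi X)) w w'
     = (\<Sum>r<n. \<Sum>i<d. \<Sum>s<n. \<Sum>j<d. cnj (w (r*d+i)) * entries (Phi (mat d d (\<lambda>(x,y). X $$ (r*d+x, s*d+y)))) i j * w' (s*d+j))"
    unfolding sesq_def sum_lessThan_mult
    by (intro sum.cong refl) (simp add: entries_def id_tensor_index)
  also have "\<dots> = (\<Sum>r<n. \<Sum>s<n. sesq d (entries (Phi (mat d d (\<lambda>(x,y). X $$ (r*d+x, s*d+y))))) (\<lambda>i. w (r*d+i)) (\<lambda>i. w' (s*d+i)))"
    unfolding sesq_def by (rule sum_swap_middle)
  finally show ?thesis .
qed

lemma ptrace2_outer: assumes "r < d" "s < d"
  shows "ptrace2 d d (outer (d*d) v) $$ (r,s) = (\<Sum>i<d. v $ (r*d+i) * cnj (v $ (s*d+i)))"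
proof -
  have "ptrace2 d d (outer (d*d) v) $$ (r,s) = (\<Sum>i<d. outer (d*d) v $$ (r*d+i, s*d+i))"
    using assms by (rule ptrace2_index)
  also have "\<dots> = (\<Sum>i<d. v $ (r*d+i) * cnj (v $ (s*d+i)))"
  proof (rule sum.cong[OF refl])
    fix i assume "i \<in> {..<d}"
    hence i: "i < d" by simp
    have "r*d+i < d*d" "s*d+i < d*d" using mult_add_less_mult[OF assms(1) i] mult_add_less_mult[OF assms(2) i] by auto
    thus "outer (d*d) v $$ (r*d+i, s*d+i) = v $ (r*d+i) * cnj (v $ (s*d+i))" by (simp add: outer_index)
  qed
  finally show ?thesis .
qed

lemma off_Suc: "off a b (Suc k) = off a b k + a k * b k"
  by (simp add: off_def)

lemma off_0[simp]: "off a b 0 = 0"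
  by (simp add: off_def)

lemma off_mono: "k \<le> k' \<Longrightarrow> off a b k \<le> off a b k'"
  unfolding off_def by (rule sum_mono2) auto

lemma off_index_less: assumes "k < K" "x < a k" "l < b k"
  shows "off a b k + x * b k + l < off a b (Suc k)" "off a b k + x * b k + l < off a b K"
proof -
  show blk: "off a b k + x * b k + l < off a b (Suc k)"
    using mult_add_less_mult[OF assms(2,3)] by (simp add: off_Suc)
  show "off a b k + x * b k + l < off a b K"
    using blk off_mono[of "Suc k" K a b] assms(1) by simp
qed

lemma sum_off_blocks: "(\<Sum>i<off a b K. f i) = (\<Sum>k<K. \<Sum>i<a k * b k. f (off a b k + i))"
  by (induct K) (simp_all add: off_Suc sum_lessThan_add)

lemma sum_off_entries: "(\<Sum>i<off a b K. f i) = (\<Sum>k<K. \<Sum>x<a k. \<Sum>l<b k. f (off a b k + x * b k + l))"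
  unfolding sum_off_blocks by (simp add: sum_lessThan_mult add.assoc)

lemma sum_block_restrict: assumes "k < K"
  shows "(\<Sum>i<off a b K. if off a b k \<le> i \<and> i < off a b (Suc k) then h i else 0)
       = (\<Sum>i<a k * b k. h (off a b k + i))"
proof -
  have le: "off a b (Suc k) \<le> off a b K" using assms by (intro off_mono) simp
  have "(\<Sum>i<off a b K. if off a b k \<le> i \<and> i < off a b (Suc k) then h i else 0)
      = (\<Sum>i\<in>{..<off a b K} \<inter> {i. off a b k \<le> i \<and> i < off a b (Suc k)}. h i)"
    by (simp add: sum.inter_restrict)
  also have "{..<off a b K} \<inter> {i. off a b k \<le> i \<and> i < off a b (Suc k)} = {0 + off a b k..<a k * b k + off a b k}"
    using le by (auto simp: off_Suc)
  also have "(\<Sum>i\<in>\<dots>. h i) = (\<Sum>i\<in>{0..<a k * b k}. h (i + off a b k))"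
    by (rule sum.shift_bounds_nat_ivl)
  finally show ?thesis by (simp add: atLeast0LessThan add.commute)
qed

lemma in_block_iff: assumes "k < K" "k' < K" "off a b k \<le> i" "i < off a b (Suc k)"
  shows "(off a b k' \<le> i \<and> i < off a b (Suc k')) \<longleftrightarrow> k' = k"
proof
  assume A: "off a b k' \<le> i \<and> i < off a b (Suc k')"
  show "k' = k"
  proof (rule ccontr)
    assume "k' \<noteq> k"
    hence "Suc k' \<le> k \<or> Suc k \<le> k'" by auto
    thus False
    proof
      assume "Suc k' \<le> k" thus False using off_mono[of "Suc k'" k a b] A assms by simp
    next
      assume "Suc k \<le> k'" thus False using off_mono[of "Suc k" k' a b] A assms by simp
    qed
  qed
qed (use assms in auto)

lemma sum_in_block: assumes "k < K" "off a b k \<le> i" "i < off a b (Suc k)"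
  shows "(\<Sum>k'<K. if off a b k' \<le> i \<and> i < off a b (Suc k') then g k' else 0) = g k"
proof -
  have "(\<Sum>k'<K. if off a b k' \<le> i \<and> i < off a b (Suc k') then g k' else 0)
      = (\<Sum>k'<K. if k' = k then g k' else 0)"
    by (intro sum.cong refl) (use in_block_iff[OF assms(1) _ assms(2,3)] in auto)
  also have "\<dots> = g k" using assms(1) by simp
  finally show ?thesis .
qed

lemma double_sum_block_diagonal:
  "(\<Sum>i<off a b K. \<Sum>j<off a b K. cnj (u i) * (\<Sum>k<K. if off a b k \<le> i \<and> i < off a b (Suc k) \<and>
        off a b k \<le> j \<and> j < off a b (Suc k) then g k (i - off a b k) (j - off a b k) else 0) * v j)
   = (\<Sum>k<K. \<Sum>i<a k * b k. \<Sum>j<a k * b k. cnj (u (off a b k + i)) * g k i j * v (off a b k + j))"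
proof -
  let ?C = "\<lambda>k i. off a b k \<le> i \<and> i < off a b (Suc k)"
  have "(\<Sum>i<off a b K. \<Sum>j<off a b K. cnj (u i) * (\<Sum>k<K. if off a b k \<le> i \<and> i < off a b (Suc k) \<and> off a b k \<le> j \<and> j < off a b (Suc k) then g k (i - off a b k) (j - off a b k) else 0) * v j)
      = (\<Sum>i<off a b K. \<Sum>j<off a b K. \<Sum>k<K. if ?C k i then (if ?C k j then cnj (u i) * g k (i - off a b k) (j - off a b k) * v j else 0) else 0)"
    by (simp only: sum_distrib_left sum_distrib_right, intro sum.cong refl) auto
  also have "\<dots> = (\<Sum>k<K. \<Sum>i<off a b K. if ?C k i then (\<Sum>j<off a b K. if ?C k j then cnj (u i) * g k (i - off a b k) (j - off a b k) * v j else 0) else 0)"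
    by (simp only: sum_swap_outer3 sum_if_const_cond)
  also have "\<dots> = (\<Sum>k<K. \<Sum>i<a k * b k. \<Sum>j<a k * b k. cnj (u (off a b k + i)) * g k i j * v (off a b k + j))"
  proof (rule sum.cong[OF refl])
    fix k assume "k \<in> {..<K}"
    hence k: "k < K" by simp
    show "(\<Sum>i<off a b K. if ?C k i then (\<Sum>j<off a b K. if ?C k j then cnj (u i) * g k (i - off a b k) (j - off a b k) * v j else 0) else 0)
       = (\<Sum>i<a k * b k. \<Sum>j<a k * b k. cnj (u (off a b k + i)) * g k i j * v (off a b k + j))"
      unfolding sum_block_restrict[OF k] by simp
  qed
  finally show ?thesis .
qed

lemma sum_block_diagonal:
  "(\<Sum>i<off a b K. (\<Sum>k<K. if off a b k \<le> i \<and> i < off a b (Suc k) then g k (i - off a b k) else 0))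
   = (\<Sum>k<K. \<Sum>i<a k * b k. g k i)"
proof -
  have "(\<Sum>i<off a b K. (\<Sum>k<K. if off a b k \<le> i \<and> i < off a b (Suc k) then g k (i - off a b k) else 0))
    = (\<Sum>k<K. \<Sum>i<off a b K. if off a b k \<le> i \<and> i < off a b (Suc k) then g k (i - off a b k) else 0)"
    by (rule sum.swap)
  also have "\<dots> = (\<Sum>k<K. \<Sum>i<a k * b k. g k i)"
    by (rule sum.cong[OF refl]) (simp add: sum_block_restrict)
  finally show ?thesis .
qed

lemma ex_block_pos: assumes "0 < off a b K" shows "\<exists>k<K. 0 < a k"
proof (rule ccontr)
  assume "\<not> (\<exists>k<K. 0 < a k)"
  hence "\<forall>k<K. a k = 0" by auto
  hence "off a b K = 0" unfolding off_def by simp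
  thus False using assms by simp
qed

lemma Max_block_dims: assumes "0 < off a b K"
  shows "0 < real (Max (a ` {..<K}))" "\<And>k. k < K \<Longrightarrow> real (a k) \<le> real (Max (a ` {..<K}))"
proof -
  obtain k0 where k0: "k0 < K" "0 < a k0" using ex_block_pos[OF assms] by blast
  show "\<And>k. k < K \<Longrightarrow> real (a k) \<le> real (Max (a ` {..<K}))" by simp
  have "a k0 \<le> Max (a ` {..<K})" using k0 by simp
  hence "0 < Max (a ` {..<K})" using k0(2) by (rule less_le_trans[rotated])
  thus "0 < real (Max (a ` {..<K}))" by simp
qed

section \<open>The block map\<close>

definition slice :: "(nat\<Rightarrow>nat) \<Rightarrow> (nat\<Rightarrow>nat) \<Rightarrow> (nat \<Rightarrow> complex) \<Rightarrow> nat \<Rightarrow> nat \<Rightarrow> nat \<Rightarrow> complex" where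
  "slice a b u k x x2 = u (off a b k + x * b k + x2)"

definition block_ptrace :: "(nat\<Rightarrow>nat) \<Rightarrow> (nat\<Rightarrow>nat) \<Rightarrow> nat \<Rightarrow> (nat \<Rightarrow> nat \<Rightarrow> complex) \<Rightarrow> nat \<Rightarrow> nat \<Rightarrow> complex" where
  "block_ptrace a b k F x y = (\<Sum>l<b k. F (off a b k + x * b k + l) (off a b k + y * b k + l))"

lemma sum_kron_rearrange: "(\<Sum>x\<in>A. \<Sum>x2\<in>B. \<Sum>y\<in>A. \<Sum>y2\<in>B. cnj (u x x2) * (p x y * d x2 y2) * v y y2)
   = (\<Sum>x\<in>A. \<Sum>y\<in>A. p x y * (\<Sum>x2\<in>B. \<Sum>y2\<in>B. cnj (u x x2) * d x2 y2 * v y y2))"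
proof -
  have "(\<Sum>x\<in>A. \<Sum>x2\<in>B. \<Sum>y\<in>A. \<Sum>y2\<in>B. cnj (u x x2) * (p x y * d x2 y2) * v y y2)
      = (\<Sum>x\<in>A. \<Sum>y\<in>A. \<Sum>x2\<in>B. \<Sum>y2\<in>B. cnj (u x x2) * (p x y * d x2 y2) * v y y2)"
    by (intro sum.cong refl) (rule sum.swap)
  also have "\<dots> = (\<Sum>x\<in>A. \<Sum>y\<in>A. p x y * (\<Sum>x2\<in>B. \<Sum>y2\<in>B. cnj (u x x2) * d x2 y2 * v y y2))"
    by (simp add: sum_distrib_left mult_ac)
  finally show ?thesis .
qed

definition block_part :: "(nat\<Rightarrow>nat) \<Rightarrow> (nat\<Rightarrow>nat) \<Rightarrow> (nat \<Rightarrow> complex mat) \<Rightarrow> complex mat \<Rightarrow> nat \<Rightarrow> complex mat" where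
  "block_part a b \<delta> Z k = kron (ptrace2 (a k) (b k)
     (mat (a k * b k) (a k * b k) (\<lambda>(x, y). Z $$ (off a b k + x, off a b k + y)))) (\<delta> k)"

lemma block_part_index:
  assumes "\<delta> k \<in> carrier_mat (b k) (b k)" "x < a k" "y < a k" "x2 < b k" "y2 < b k"
  shows "block_part a b \<delta> Z k $$ (x * b k + x2, y * b k + y2) = block_ptrace a b k (entries Z) x y * \<delta> k $$ (x2, y2)"
proof -
  have "block_part a b \<delta> Z k $$ (x * b k + x2, y * b k + y2) = ptrace2 (a k) (b k)
      (mat (a k * b k) (a k * b k) (\<lambda>(x, y). Z $$ (off a b k + x, off a b k + y))) $$ (x,y) * \<delta> k $$ (x2, y2)"
    unfolding block_part_def by (rule kron_index) (use assms in \<open>auto simp: ptrace2_def\<close>)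
  also have "ptrace2 (a k) (b k) (mat (a k * b k) (a k * b k) (\<lambda>(x, y). Z $$ (off a b k + x, off a b k + y))) $$ (x,y)
      = block_ptrace a b k (entries Z) x y"
    using assms mult_add_less_mult[of x "a k" _ "b k"] mult_add_less_mult[of y "a k" _ "b k"]
    by (simp add: ptrace2_index block_ptrace_def entries_def add.assoc)
  finally show ?thesis .
qed

lemma sesq_blockP: assumes \<delta>: "\<forall>k<K. \<delta> k \<in> carrier_mat (b k) (b k)"
  shows "sesq (off a b K) (entries (blockP K a b \<delta> Z)) u v
    = (\<Sum>k<K. \<Sum>x<a k. \<Sum>y<a k. block_ptrace a b k (entries Z) x y * sesq (b k) (entries (\<delta> k)) (slice a b u k x) (slice a b v k y))"
proof -
  let ?Q = "block_part a b \<delta> Z"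
  have "sesq (off a b K) (entries (blockP K a b \<delta> Z)) u v
    = (\<Sum>i<off a b K. \<Sum>j<off a b K. cnj (u i) * (\<Sum>k<K. if off a b k \<le> i \<and> i < off a b (Suc k) \<and>
        off a b k \<le> j \<and> j < off a b (Suc k) then ?Q k $$ (i - off a b k, j - off a b k) else 0) * v j)"
    unfolding sesq_def entries_def blockP_def block_part_def by (intro sum.cong refl) simp
  also have "\<dots> = (\<Sum>k<K. \<Sum>i<a k * b k. \<Sum>j<a k * b k. cnj (u (off a b k + i)) * ?Q k $$ (i, j) * v (off a b k + j))"
    by (rule double_sum_block_diagonal[where g="\<lambda>k i j. ?Q k $$ (i, j)"])
  also have "\<dots> = (\<Sum>k<K. \<Sum>x<a k. \<Sum>x2<b k. \<Sum>y<a k. \<Sum>y2<b k. cnj (slice a b u k x x2)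
        * (block_ptrace a b k (entries Z) x y * \<delta> k $$ (x2, y2)) * slice a b v k y y2)"
    unfolding sum_lessThan_mult using \<delta>
    by (intro sum.cong refl) (simp add: block_part_index slice_def add.assoc)
  also have "\<dots> = (\<Sum>k<K. \<Sum>x<a k. \<Sum>y<a k. block_ptrace a b k (entries Z) x y * sesq (b k) (entries (\<delta> k)) (slice a b u k x) (slice a b v k y))"
    unfolding sum_kron_rearrange sesq_def entries_def ..
  finally show ?thesis .
qed

lemma dim_blockP[simp]: "dim_row (blockP K a b \<delta> Z) = off a b K" "dim_col (blockP K a b \<delta> Z) = off a b K"
  by (simp_all add: blockP_def)

lemma blockP_diag: "i < off a b K \<Longrightarrow> blockP K a b \<delta> Z $$ (i,i) = (\<Sum>k<K. if off a b k \<le> i \<and> i < off a b (Suc k) then kron (ptrace2 (a k) (b k)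
                    (mat (a k * b k) (a k * b k) (\<lambda>(x, y). Z $$ (off a b k + x, off a b k + y)))) (\<delta> k) $$ (i - off a b k, i - off a b k) else 0)"
  unfolding blockP_def by (simp cong: conj_cong)

lemma tr_blockP: assumes \<delta>: "\<forall>k<K. \<delta> k \<in> carrier_mat (b k) (b k)"
  and t: "\<forall>k<K. tr (\<delta> k) = 1"
  shows "tr (blockP K a b \<delta> Z) = (\<Sum>k<K. \<Sum>x<a k. block_ptrace a b k (entries Z) x x)"
proof -
  let ?Q = "block_part a b \<delta> Z"
  have "tr (blockP K a b \<delta> Z) = (\<Sum>i<off a b K. (\<Sum>k<K. if off a b k \<le> i \<and> i < off a b (Suc k) then ?Q k $$ (i - off a b k, i - off a b k) else 0))"
    unfolding tr_def block_part_def by (intro sum.cong) (simp_all add: blockP_diag)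
  also have "\<dots> = (\<Sum>k<K. \<Sum>i<a k * b k. ?Q k $$ (i, i))"
    by (rule sum_block_diagonal[where g="\<lambda>k i. ?Q k $$ (i, i)"])
  also have "\<dots> = (\<Sum>k<K. \<Sum>x<a k. block_ptrace a b k (entries Z) x x * tr (\<delta> k))"
  proof (rule sum.cong[OF refl])
    fix k assume "k \<in> {..<K}"
    hence k: "\<delta> k \<in> carrier_mat (b k) (b k)" using \<delta> by simp
    have "(\<Sum>i<a k * b k. ?Q k $$ (i, i)) = (\<Sum>x<a k. \<Sum>x2<b k. block_ptrace a b k (entries Z) x x * \<delta> k $$ (x2, x2))"
      unfolding sum_lessThan_mult by (intro sum.cong refl) (simp add: block_part_index[where \<delta>=\<delta> and k=k and b=b, OF k])
    also have "\<dots> = (\<Sum>x<a k. block_ptrace a b k (entries Z) x x * tr (\<delta> k))"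
      using k by (simp add: sum_distrib_left tr_def)
    finally show "(\<Sum>i<a k * b k. ?Q k $$ (i, i)) = (\<Sum>x<a k. block_ptrace a b k (entries Z) x x * tr (\<delta> k))" .
  qed
  finally show ?thesis using t by simp
qed

lemma block_states_props: assumes "\<forall>k<K. \<delta> k \<in> states (b k)"
  shows "\<forall>k<K. \<delta> k \<in> carrier_mat (b k) (b k)" "\<forall>k<K. tr (\<delta> k) = 1" "\<forall>k<K. psd (b k) (\<delta> k)"
    "\<forall>k<K. 0 < b k" "\<forall>k<K. psd_kernel (b k) (entries (\<delta> k))"
proof -
  show "\<forall>k<K. \<delta> k \<in> carrier_mat (b k) (b k)" "\<forall>k<K. tr (\<delta> k) = 1" "\<forall>k<K. psd (b k) (\<delta> k)"
    using assms unfolding states_def psd_def by auto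
  thus "\<forall>k<K. psd_kernel (b k) (entries (\<delta> k))" using psd_kernel_of_psd by blast
  show "\<forall>k<K. 0 < b k"
  proof (intro allI impI)
    fix k assume k: "k < K"
    show "0 < b k" using assms k states_dim_pos by blast
  qed
qed

lemma psd_kernel_block_ptrace: assumes X: "psd_kernel d (entries X)" and k: "k < K" and d: "d = off a b K"
  shows "psd_kernel (a k) (block_ptrace a b k (entries X))"
  unfolding psd_kernel_def
proof
  fix u :: "nat \<Rightarrow> complex"
  let ?e = "\<lambda>x l. off a b k + x * b k + l"
  define ut where "ut l = (\<lambda>i. \<Sum>x<a k. u x * (if i = ?e x l then 1 else 0))" for l
  have lt: "?e x l < d" if "x < a k" "l < b k" for x l using off_index_less(2)[where K=K and a=a and b=b, OF k that] d by simp
  have "sesq (a k) (block_ptrace a b k (entries X)) u u = (\<Sum>l<b k. sesq d (entries X) (ut l) (ut l))"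
  proof -
    have "sesq (a k) (block_ptrace a b k (entries X)) u u = (\<Sum>x<a k. \<Sum>y<a k. \<Sum>l<b k. cnj (u x) * u y * entries X (?e x l) (?e y l))"
      unfolding sesq_def block_ptrace_def by (simp add: sum_distrib_left sum_distrib_right mult_ac)
    also have "\<dots> = (\<Sum>l<b k. \<Sum>x<a k. \<Sum>y<a k. cnj (u x) * u y * entries X (?e x l) (?e y l))"
      by (simp only: sum.swap[where B="{..<b k}"])
    also have "\<dots> = (\<Sum>l<b k. sesq d (entries X) (ut l) (ut l))"
    proof (rule sum.cong[OF refl])
      fix l assume "l \<in> {..<b k}"
      hence l: "l < b k" by simp
      have "sesq d (entries X) (ut l) (ut l) = (\<Sum>x<a k. \<Sum>y<a k. cnj (u x) * u y * sesq d (entries X) (\<lambda>i. if i = ?e x l then 1 else 0) (\<lambda>i. if i = ?e y l then 1 else 0))"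
        unfolding ut_def by (simp add: sesq_sum_left sesq_sum_right sesq_scale_left sesq_scale_right sum_distrib_left mult.assoc del: if_one_zero_mult)
      also have "\<dots> = (\<Sum>x<a k. \<Sum>y<a k. cnj (u x) * u y * entries X (?e x l) (?e y l))"
        by (intro sum.cong refl) (simp add: sesq_unit_vectors lt l)
      finally show "(\<Sum>x<a k. \<Sum>y<a k. cnj (u x) * u y * entries X (?e x l) (?e y l)) = sesq d (entries X) (ut l) (ut l)" ..
    qed
    finally show ?thesis .
  qed
  thus "Im (sesq (a k) (block_ptrace a b k (entries X)) u u) = 0 \<and> 0 \<le> Re (sesq (a k) (block_ptrace a b k (entries X)) u u)"
    using X unfolding psd_kernel_def Im_sum Re_sum by (auto intro: sum_nonneg)
qed

lemma sum_block_ptrace_diag: assumes d: "d = off a b K" and X: "dim_row X = d"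
  shows "(\<Sum>k<K. \<Sum>x<a k. block_ptrace a b k (entries X) x x) = tr X"
  unfolding tr_def X d sum_off_entries block_ptrace_def entries_def ..

lemma block_ptrace_trace_le_one:
  assumes d: "d = off a b K" and X: "X \<in> states d" and k: "k < K"
  shows "(\<Sum>x<a k. Re (block_ptrace a b k (entries X) x x)) \<le> 1"
proof -
  let ?t = "\<lambda>k. \<Sum>x<a k. Re (block_ptrace a b k (entries X) x x)"
  have Xp: "psd_kernel d (entries X)" using X unfolding states_def by (auto intro: psd_kernel_of_psd)
  have Xd: "dim_row X = d" and Xt: "tr X = 1" using X unfolding states_def psd_def by auto
  have "(\<Sum>k<K. ?t k) = 1"
    using arg_cong[OF sum_block_ptrace_diag[OF d Xd], of Re] Xt unfolding Re_sum by simp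
  moreover have "?t k \<le> (\<Sum>k<K. ?t k)"
    by (rule member_le_sum[where f="?t"])
       (use k psd_kernel_diag(1)[OF psd_kernel_block_ptrace[OF Xp _ d]] in \<open>auto intro: sum_nonneg\<close>)
  ultimately show ?thesis by simp
qed

lemma Im_sesq_blockP:
  assumes A: "\<forall>k<K. \<delta> k \<in> states (b k)" and d: "d = off a b K" and X: "psd_kernel d (entries X)"
  shows "Im (sesq d (entries (blockP K a b \<delta> X)) u u) = 0"
proof -
  note DF = block_states_props[OF A]
  let ?\<tau> = "\<lambda>k. block_ptrace a b k (entries X)"
  let ?G = "\<lambda>k x y. sesq (b k) (entries (\<delta> k)) (slice a b u k x) (slice a b u k y)"
  have "Im (\<Sum>x<a k. \<Sum>y<a k. ?\<tau> k x y * ?G k x y) = 0" if k: "k < K" for k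
  proof (rule hermitian_pairing_real)
    fix x y assume "x < a k" "y < a k"
    thus "?\<tau> k y x = cnj (?\<tau> k x y)" by (rule psd_kernel_hermitian[OF psd_kernel_block_ptrace[OF X k d]])
    show "?G k y x = cnj (?G k x y)" by (rule psd_kernel_sesq_swap) (use DF(5) k in blast)
  qed
  thus ?thesis unfolding d sesq_blockP[OF DF(1)] Im_sum[of _ "{..<K}"] by simp
qed

lemma Re_sesq_blockP_state_le:
  assumes A: "\<forall>k<K. \<delta> k \<in> states (b k)" and d: "d = off a b K" and X: "X \<in> states d"
  shows "Re (sesq d (entries (blockP K a b \<delta> X)) u u)
    \<le> (\<Sum>k<K. \<Sum>x<a k. Re (sesq (b k) (entries (\<delta> k)) (slice a b u k x) (slice a b u k x)))"
proof -
  note DF = block_states_props[OF A]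
  let ?\<tau> = "\<lambda>k. block_ptrace a b k (entries X)"
  let ?G = "\<lambda>k x y. sesq (b k) (entries (\<delta> k)) (slice a b u k x) (slice a b u k y)"
  have Xp: "psd_kernel d (entries X)" using X unfolding states_def by (auto intro: psd_kernel_of_psd)
  have "Re (sesq d (entries (blockP K a b \<delta> X)) u u) = (\<Sum>k<K. Re (\<Sum>x<a k. \<Sum>y<a k. ?\<tau> k x y * ?G k x y))"
    unfolding d sesq_blockP[OF DF(1)] Re_sum[of _ "{..<K}"] ..
  also have "\<dots> \<le> (\<Sum>k<K. \<Sum>x<a k. Re (?G k x x))"
  proof (rule sum_mono)
    fix k assume "k \<in> {..<K}"
    hence k: "k < K" by simp
    have dp: "psd_kernel (b k) (entries (\<delta> k))" using DF(5) k by blast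
    have G0: "0 \<le> Re (?G k x x)" for x by (rule psd_kernel_sesq_nonneg[OF dp])
    have "Re (\<Sum>x<a k. \<Sum>y<a k. ?\<tau> k x y * ?G k x y) \<le> (\<Sum>x<a k. Re (?\<tau> k x x)) * (\<Sum>x<a k. Re (?G k x x))"
      by (rule psd_kernel_pairing_le[OF psd_kernel_block_ptrace[OF Xp k d]])
         (auto intro: psd_kernel_cauchy_schwarz_sqrt[OF dp] G0)
    also have "\<dots> \<le> 1 * (\<Sum>x<a k. Re (?G k x x))"
      by (rule mult_right_mono[OF block_ptrace_trace_le_one[OF d X k]]) (auto intro: sum_nonneg G0)
    finally show "Re (\<Sum>x<a k. \<Sum>y<a k. ?\<tau> k x y * ?G k x y) \<le> (\<Sum>x<a k. Re (?G k x x))" by simp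
  qed
  finally show ?thesis .
qed

lemma block_ptrace_diag_mat: assumes "k < K" "x < a k" "y < a k"
  shows "block_ptrace a b k (entries (diag_mat (off a b K) z)) x y
     = (if x = y then complex_of_real (\<Sum>l<b k. z (off a b k + x * b k + l)) else 0)"
proof (cases "x = y")
  case True
  thus ?thesis unfolding block_ptrace_def entries_def diag_mat_def using off_index_less(2)[where K=K and a=a and b=b, OF assms(1,2)] by simp
next
  case False
  have "off a b k + x * b k + l \<noteq> off a b k + y * b k + l" if "l < b k" for l
    using False that by simp
  thus ?thesis unfolding block_ptrace_def entries_def diag_mat_def using off_index_less(2)[where K=K and a=a and b=b, OF assms(1,2)] off_index_less(2)[where K=K and a=a and b=b, OF assms(1,3)] False
    by simp
qed

lemma if_zero_mult_distrib:
  "(if P then x else 0) * c = (if P then x * c else (0::'a::mult_zero))"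
  "c * (if P then x else 0) = (if P then c * x else (0::'a::mult_zero))"
  by simp_all

lemma sesq_blockP_diag_mat: assumes dc: "\<forall>k<K. \<delta> k \<in> carrier_mat (b k) (b k)" and d: "d = off a b K"
  shows "sesq d (entries (blockP K a b \<delta> (diag_mat d z))) u u'
    = (\<Sum>k<K. \<Sum>x<a k. complex_of_real (\<Sum>l<b k. z (off a b k + x * b k + l)) * sesq (b k) (entries (\<delta> k)) (slice a b u k x) (slice a b u' k x))"
  unfolding d sesq_blockP[OF dc]
proof (rule sum.cong[OF refl])
  fix k assume "k \<in> {..<K}"
  hence k: "k < K" by simp
  show "(\<Sum>x<a k. \<Sum>y<a k. block_ptrace a b k (entries (diag_mat (off a b K) z)) x y * sesq (b k) (entries (\<delta> k)) (slice a b u k x) (slice a b u' k y))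
    = (\<Sum>x<a k. complex_of_real (\<Sum>l<b k. z (off a b k + x * b k + l)) * sesq (b k) (entries (\<delta> k)) (slice a b u k x) (slice a b u' k x))"
    by (simp add: block_ptrace_diag_mat[where K=K and a=a and b=b, OF k] if_zero_mult_distrib)
qed

lemma tr_blockP_diag_mat: assumes dc: "\<forall>k<K. \<delta> k \<in> carrier_mat (b k) (b k)" and dt: "\<forall>k<K. tr (\<delta> k) = 1"
  and d: "d = off a b K"
  shows "tr (blockP K a b \<delta> (diag_mat d z)) = complex_of_real (\<Sum>i<d. z i)"
proof -
  have "tr (blockP K a b \<delta> (diag_mat d z)) = (\<Sum>k<K. \<Sum>x<a k. complex_of_real (\<Sum>l<b k. z (off a b k + x * b k + l)))"
    unfolding tr_blockP[OF dc dt] d by (intro sum.cong refl) (simp add: block_ptrace_diag_mat)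
  also have "\<dots> = complex_of_real (\<Sum>i<d. z i)" unfolding d sum_off_entries of_real_sum ..
  finally show ?thesis .
qed

lemma blockP_diag_mat_states: assumes A: "\<forall>k<K. \<delta> k \<in> states (b k)" and d: "d = off a b K"
  and z: "\<forall>i<d. 0 \<le> z i" "(\<Sum>i<d. z i) = 1"
  shows "blockP K a b \<delta> (diag_mat d z) \<in> states d"
proof -
  note DF = block_states_props[OF A]
  have "psd d (blockP K a b \<delta> (diag_mat d z))"
  proof (rule psd_of_psd_kernel)
    show "blockP K a b \<delta> (diag_mat d z) \<in> carrier_mat d d" by (rule carrier_matI) (simp_all add: d)
    show "psd_kernel d (entries (blockP K a b \<delta> (diag_mat d z)))"
      unfolding psd_kernel_def
    proof
      fix u
      define X where "X k x = complex_of_real (\<Sum>l<b k. z (off a b k + x * b k + l)) * sesq (b k) (entries (\<delta> k)) (slice a b u k x) (slice a b u k x)" for k x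
      have H: "Im (X k x) = 0 \<and> 0 \<le> Re (X k x)" if "k < K" "x < a k" for k x
      proof -
        have "0 \<le> (\<Sum>l<b k. z (off a b k + x * b k + l))"
          by (intro sum_nonneg) (use z(1) off_index_less(2)[where K=K and a=a and b=b, OF that] d in auto)
        moreover have "psd_kernel (b k) (entries (\<delta> k))" using DF(5) that by blast
        ultimately show ?thesis unfolding X_def psd_kernel_def by simp
      qed
      have "sesq d (entries (blockP K a b \<delta> (diag_mat d z))) u u = (\<Sum>k<K. \<Sum>x<a k. X k x)"
        unfolding X_def by (rule sesq_blockP_diag_mat[OF DF(1) d])
      moreover have "Im (\<Sum>k<K. \<Sum>x<a k. X k x) = 0" unfolding Im_sum by (intro sum.neutral ballI) (use H in auto)
      moreover have "0 \<le> Re (\<Sum>k<K. \<Sum>x<a k. X k x)" unfolding Re_sum by (intro sum_nonneg) (use H in auto)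
      ultimately show "Im (sesq d (entries (blockP K a b \<delta> (diag_mat d z))) u u) = 0 \<and> 0 \<le> Re (sesq d (entries (blockP K a b \<delta> (diag_mat d z))) u u)"
        by simp
    qed
  qed
  moreover have "tr (blockP K a b \<delta> (diag_mat d z)) = 1" unfolding tr_blockP_diag_mat[OF DF(1) DF(2) d] z(2) by simp
  ultimately show ?thesis unfolding states_def by simp
qed

section \<open>Block comparison states\<close>

definition block_weight :: "nat \<Rightarrow> (nat\<Rightarrow>nat) \<Rightarrow> (nat\<Rightarrow>nat) \<Rightarrow> (nat \<Rightarrow> real) \<Rightarrow> nat \<Rightarrow> real" where
  "block_weight K a b c i = (\<Sum>k<K. if off a b k \<le> i \<and> i < off a b (Suc k) then c k / real (b k) else 0)"

text \<open>\<open>block_sigma K a b \<delta> c\<close> is \<open>\<Oplus>\<^sub>k c\<^sub>k \<one> \<otimes> \<delta>\<^sub>k\<close>, written as \<open>\<P>\<close> of the diagonal state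
  with weight \<open>c\<^sub>k / b\<^sub>k\<close> on block \<open>k\<close>.\<close>
definition block_sigma :: "nat \<Rightarrow> (nat\<Rightarrow>nat) \<Rightarrow> (nat\<Rightarrow>nat) \<Rightarrow> (nat \<Rightarrow> complex mat) \<Rightarrow> (nat \<Rightarrow> real) \<Rightarrow> complex mat" where
  "block_sigma K a b \<delta> c = blockP K a b \<delta> (diag_mat (off a b K) (block_weight K a b c))"

lemma block_weight_index: assumes "k < K" "x < a k" "l < b k"
  shows "block_weight K a b c (off a b k + x * b k + l) = c k / real (b k)"
  unfolding block_weight_def by (rule sum_in_block[OF assms(1)]) (use off_index_less(1)[where K=K and a=a and b=b, OF assms] in auto)

lemma block_ptrace_block_weight: assumes "k < K" "x < a k" "y < a k" "0 < b k"
  shows "block_ptrace a b k (entries (diag_mat (off a b K) (block_weight K a b c))) x y = (if x = y then complex_of_real (c k) else 0)"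
proof -
  have "(\<Sum>l<b k. block_weight K a b c (off a b k + x * b k + l)) = (\<Sum>l<b k. c k / real (b k))"
    by (intro sum.cong refl) (use block_weight_index[where K=K and a=a and b=b, OF assms(1,2)] in auto)
  also have "\<dots> = c k" using assms by simp
  finally have eq: "(\<Sum>l<b k. block_weight K a b c (off a b k + x * b k + l)) = c k" .
  show ?thesis unfolding block_ptrace_diag_mat[where K=K and a=a and b=b, OF assms(1-3)] eq by simp
qed

lemma sesq_block_sigma: assumes \<delta>: "\<forall>k<K. \<delta> k \<in> carrier_mat (b k) (b k)"
  and b: "\<forall>k<K. 0 < b k"
  shows "sesq (off a b K) (entries (block_sigma K a b \<delta> c)) u v
    = (\<Sum>k<K. complex_of_real (c k) * (\<Sum>x<a k. sesq (b k) (entries (\<delta> k)) (slice a b u k x) (slice a b v k x)))"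
  unfolding block_sigma_def sesq_blockP[OF \<delta>]
proof (rule sum.cong[OF refl])
  fix k assume "k \<in> {..<K}"
  hence k: "k < K" by simp
  have "(\<Sum>x<a k. \<Sum>y<a k. block_ptrace a b k (entries (diag_mat (off a b K) (block_weight K a b c))) x y * sesq (b k) (entries (\<delta> k)) (slice a b u k x) (slice a b v k y))
    = (\<Sum>x<a k. \<Sum>y<a k. (if x = y then complex_of_real (c k) * sesq (b k) (entries (\<delta> k)) (slice a b u k x) (slice a b v k y) else 0))"
    by (intro sum.cong refl) (simp add: block_ptrace_block_weight[where K=K and a=a and b=b, OF k _ _ b[rule_format, OF k]])
  also have "\<dots> = complex_of_real (c k) * (\<Sum>x<a k. sesq (b k) (entries (\<delta> k)) (slice a b u k x) (slice a b v k x))"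
    by (simp add: sum_distrib_left)
  finally show "(\<Sum>x<a k. \<Sum>y<a k. block_ptrace a b k (entries (diag_mat (off a b K) (block_weight K a b c))) x y * sesq (b k) (entries (\<delta> k)) (slice a b u k x) (slice a b v k y))
    = complex_of_real (c k) * (\<Sum>x<a k. sesq (b k) (entries (\<delta> k)) (slice a b u k x) (slice a b v k x))" .
qed

lemma block_sigma_states:
  assumes \<delta>: "\<forall>k<K. \<delta> k \<in> states (b k)" and c: "\<forall>k<K. 0 \<le> c k"
    and s: "(\<Sum>k<K. real (a k) * c k) = 1"
  shows "block_sigma K a b \<delta> c \<in> states (off a b K)"
  unfolding block_sigma_def
proof (rule blockP_diag_mat_states[OF \<delta> refl])
  have b: "\<forall>k<K. 0 < b k" by (rule block_states_props(4)[OF \<delta>])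
  show "\<forall>i<off a b K. 0 \<le> block_weight K a b c i"
    unfolding block_weight_def using c by (auto intro!: sum_nonneg)
  have "(\<Sum>i<off a b K. block_weight K a b c i) = (\<Sum>k<K. \<Sum>x<a k. \<Sum>l<b k. c k / real (b k))"
    unfolding sum_off_entries by (intro sum.cong refl) (auto simp: block_weight_index)
  also have "\<dots> = (\<Sum>k<K. real (a k) * c k)"
    by (intro sum.cong refl) (use b in auto)
  finally show "(\<Sum>i<off a b K. block_weight K a b c i) = 1" using s by simp
qed

section \<open>Contractions with a pure state\<close>

definition amp :: "complex vec \<Rightarrow> nat \<Rightarrow> (nat\<Rightarrow>nat) \<Rightarrow> (nat\<Rightarrow>nat) \<Rightarrow> nat \<Rightarrow> nat \<Rightarrow> nat \<Rightarrow> nat \<Rightarrow> complex" where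
  "amp v d a b r k x l = v $ (r*d + (off a b k + x * b k + l))"

text \<open>For \<open>\<psi> = |v\<rangle>\<langle>v|\<close> and a test vector \<open>w\<close>, \<open>contr v w d a b k l\<close> is the vector \<open>Z\<^sub>k\<^sub>l\<close>
  of the proof idea.\<close>
definition contr :: "complex vec \<Rightarrow> (nat \<Rightarrow> complex) \<Rightarrow> nat \<Rightarrow> (nat\<Rightarrow>nat) \<Rightarrow> (nat\<Rightarrow>nat) \<Rightarrow> nat \<Rightarrow> nat \<Rightarrow> nat \<Rightarrow> complex" where
  "contr v w d a b k l = (\<lambda>x2. \<Sum>r<d. \<Sum>x<a k. cnj (amp v d a b r k x l) * slice a b (\<lambda>i. w (r*d+i)) k x x2)"

lemma block_ptrace_pure: assumes "k < K" "x < a k" "y < a k" "r < d" "s < d" "d = off a b K"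
  shows "block_ptrace a b k (entries (mat d d (\<lambda>(x,y). outer (d*d) v $$ (r*d+x, s*d+y)))) x y
    = (\<Sum>l<b k. amp v d a b r k x l * cnj (amp v d a b s k y l))"
  unfolding block_ptrace_def
proof (rule sum.cong[OF refl])
  fix l assume "l \<in> {..<b k}"
  hence l: "l < b k" by simp
  have i1: "off a b k + x * b k + l < d" using off_index_less(2)[where K=K and a=a and b=b, OF assms(1,2) l] assms(6) by simp
  have i2: "off a b k + y * b k + l < d" using off_index_less(2)[where K=K and a=a and b=b, OF assms(1,3) l] assms(6) by simp
  have j1: "r*d + (off a b k + x * b k + l) < d*d" using mult_add_less_mult[OF assms(4) i1] by (simp add: mult.commute)
  have j2: "s*d + (off a b k + y * b k + l) < d*d" using mult_add_less_mult[OF assms(5) i2] by (simp add: mult.commute)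
  show "entries (mat d d (\<lambda>(x,y). outer (d*d) v $$ (r*d+x, s*d+y))) (off a b k + x * b k + l) (off a b k + y * b k + l)
     = amp v d a b r k x l * cnj (amp v d a b s k y l)"
    unfolding entries_def amp_def using i1 i2 j1 j2 by (simp add: outer_index)
qed

lemma sesq_contr: "sesq n M (contr v w d a b k l) (contr v w d a b k l)
   = (\<Sum>r<d. \<Sum>x<a k. \<Sum>s<d. \<Sum>y<a k. amp v d a b r k x l * cnj (amp v d a b s k y l)
        * sesq n M (slice a b (\<lambda>i. w (r*d+i)) k x) (slice a b (\<lambda>i. w (s*d+i)) k y))"
  unfolding contr_def
  by (simp add: sesq_sum_left sesq_sum_right sesq_scale_left sesq_scale_right sum_distrib_left mult.assoc)

lemma sesq_id_tensor_pure: assumes \<delta>: "\<forall>k<K. \<delta> k \<in> carrier_mat (b k) (b k)" and d: "d = off a b K"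
  shows "sesq (d*d) (entries (id_tensor d d (blockP K a b \<delta>) (outer (d*d) v))) w w
    = (\<Sum>k<K. \<Sum>l<b k. sesq (b k) (entries (\<delta> k)) (contr v w d a b k l) (contr v w d a b k l))"
proof -
  let ?S = "\<lambda>k r s x y. sesq (b k) (entries (\<delta> k)) (slice a b (\<lambda>i. w (r*d+i)) k x) (slice a b (\<lambda>i. w (s*d+i)) k y)"
  let ?M = "\<lambda>r s. mat d d (\<lambda>(x,y). outer (d*d) v $$ (r*d+x, s*d+y))"
  have "sesq (d*d) (entries (id_tensor d d (blockP K a b \<delta>) (outer (d*d) v))) w w
     = (\<Sum>r<d. \<Sum>s<d. \<Sum>k<K. \<Sum>x<a k. \<Sum>y<a k. block_ptrace a b k (entries (?M r s)) x y * ?S k r s x y)"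
    unfolding sesq_id_tensor d sesq_blockP[OF \<delta>] ..
  also have "\<dots> = (\<Sum>k<K. \<Sum>r<d. \<Sum>s<d. \<Sum>x<a k. \<Sum>y<a k. block_ptrace a b k (entries (?M r s)) x y * ?S k r s x y)"
    by (rule sum_swap_outer3)
  also have "\<dots> = (\<Sum>k<K. \<Sum>l<b k. sesq (b k) (entries (\<delta> k)) (contr v w d a b k l) (contr v w d a b k l))"
  proof (rule sum.cong[OF refl])
    fix k assume "k \<in> {..<K}"
    hence k: "k < K" by simp
    let ?A = "\<lambda>r x l. amp v d a b r k x l"
    have "(\<Sum>r<d. \<Sum>s<d. \<Sum>x<a k. \<Sum>y<a k. block_ptrace a b k (entries (?M r s)) x y * ?S k r s x y)
       = (\<Sum>r<d. \<Sum>s<d. \<Sum>x<a k. \<Sum>y<a k. \<Sum>l<b k. ?A r x l * cnj (?A s y l) * ?S k r s x y)"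
      by (intro sum.cong refl) (simp add: block_ptrace_pure[OF k _ _ _ _ d] sum_distrib_right)
    also have "\<dots> = (\<Sum>r<d. \<Sum>x<a k. \<Sum>s<d. \<Sum>y<a k. \<Sum>l<b k. ?A r x l * cnj (?A s y l) * ?S k r s x y)"
      by (rule sum.cong[OF refl], rule sum.swap)
    also have "\<dots> = (\<Sum>l<b k. \<Sum>r<d. \<Sum>x<a k. \<Sum>s<d. \<Sum>y<a k. ?A r x l * cnj (?A s y l) * ?S k r s x y)"
      by (simp only: sum.swap[where B="{..<b k}"])
    also have "\<dots> = (\<Sum>l<b k. sesq (b k) (entries (\<delta> k)) (contr v w d a b k l) (contr v w d a b k l))"
      unfolding sesq_contr ..
    finally show "(\<Sum>r<d. \<Sum>s<d. \<Sum>x<a k. \<Sum>y<a k. block_ptrace a b k (entries (?M r s)) x y * ?S k r s x y)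
       = (\<Sum>l<b k. sesq (b k) (entries (\<delta> k)) (contr v w d a b k l) (contr v w d a b k l))" .
  qed
  finally show ?thesis .
qed

lemma Im_sesq_id_tensor_pure:
  assumes A: "\<forall>k<K. \<delta> k \<in> states (b k)" and d: "d = off a b K"
  shows "Im (sesq (d*d) (entries (id_tensor d d (blockP K a b \<delta>) (outer (d*d) v))) w w) = 0"
  using block_states_props(5)[OF A]
  unfolding sesq_id_tensor_pure[OF block_states_props(1)[OF A] d] Im_sum psd_kernel_def by simp

definition block_mass :: "complex vec \<Rightarrow> nat \<Rightarrow> (nat\<Rightarrow>nat) \<Rightarrow> (nat\<Rightarrow>nat) \<Rightarrow> nat \<Rightarrow> real" where
  "block_mass v d a b k = (\<Sum>l<b k. \<Sum>r<d. \<Sum>x<a k. (cmod (amp v d a b r k x l))\<^sup>2)"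

lemma block_mass_nonneg: "0 \<le> block_mass v d a b k"
  unfolding block_mass_def by (intro sum_nonneg) auto

lemma sum_block_mass: assumes d: "d = off a b K" and v: "(\<Sum>i<d*d. (cmod (v $ i))\<^sup>2) = 1"
  shows "(\<Sum>k<K. block_mass v d a b k) = 1"
proof -
  have "1 = (\<Sum>r<d. \<Sum>i<off a b K. (cmod (v $ (r*d+i)))\<^sup>2)" using v d by (simp add: sum_lessThan_mult)
  also have "\<dots> = (\<Sum>r<d. \<Sum>k<K. \<Sum>x<a k. \<Sum>l<b k. (cmod (amp v d a b r k x l))\<^sup>2)"
    unfolding sum_off_entries amp_def ..
  also have "\<dots> = (\<Sum>k<K. \<Sum>r<d. \<Sum>x<a k. \<Sum>l<b k. (cmod (amp v d a b r k x l))\<^sup>2)"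
    by (rule sum.swap)
  also have "\<dots> = (\<Sum>k<K. block_mass v d a b k)"
    unfolding block_mass_def by (rule sum.cong[OF refl]) (simp only: sum.swap[where B="{..<b _}"])
  finally show ?thesis by simp
qed

lemma sesq_contr_le: assumes P: "psd_kernel n M"
  shows "Re (sesq n M (contr v w d a b k l) (contr v w d a b k l))
    \<le> (\<Sum>r<d. \<Sum>x<a k. (cmod (amp v d a b r k x l))\<^sup>2) * (\<Sum>r<d. \<Sum>x<a k. Re (sesq n M (slice a b (\<lambda>i. w (r*d+i)) k x) (slice a b (\<lambda>i. w (r*d+i)) k x)))"
proof -
  define J where "J = {..<d} \<times> {..<a k}"
  define cq where "cq = (\<lambda>(r,x). cnj (amp v d a b r k x l))"
  define fq where "fq = (\<lambda>(r,x). slice a b (\<lambda>i. w (r*d+i)) k x)"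
  have Z: "contr v w d a b k l = (\<lambda>x2. \<Sum>q\<in>J. cq q * fq q x2)"
    unfolding contr_def J_def cq_def fq_def by (simp add: sum.cartesian_product split_def)
  have "Re (sesq n M (contr v w d a b k l) (contr v w d a b k l)) \<le> (\<Sum>q\<in>J. (cmod (cq q))\<^sup>2) * (\<Sum>q\<in>J. Re (sesq n M (fq q) (fq q)))"
    unfolding Z by (rule psd_kernel_sesq_lincomb_le[OF P]) (simp add: J_def)
  also have "(\<Sum>q\<in>J. (cmod (cq q))\<^sup>2) = (\<Sum>r<d. \<Sum>x<a k. (cmod (amp v d a b r k x l))\<^sup>2)"
    unfolding J_def cq_def by (simp add: sum.cartesian_product split_def)
  also have "(\<Sum>q\<in>J. Re (sesq n M (fq q) (fq q))) = (\<Sum>r<d. \<Sum>x<a k. Re (sesq n M (slice a b (\<lambda>i. w (r*d+i)) k x) (slice a b (\<lambda>i. w (r*d+i)) k x)))"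
    unfolding J_def fq_def by (simp add: sum.cartesian_product split_def)
  finally show ?thesis .
qed

lemma sum_sesq_contr_le:
  assumes "psd_kernel n M"
  shows "(\<Sum>l<b k. Re (sesq n M (contr v w d a b k l) (contr v w d a b k l)))
    \<le> block_mass v d a b k * (\<Sum>r<d. \<Sum>x<a k. Re (sesq n M (slice a b (\<lambda>i. w (r*d+i)) k x) (slice a b (\<lambda>i. w (r*d+i)) k x)))"
proof -
  have "(\<Sum>l<b k. Re (sesq n M (contr v w d a b k l) (contr v w d a b k l)))
      \<le> (\<Sum>l<b k. (\<Sum>r<d. \<Sum>x<a k. (cmod (amp v d a b r k x l))\<^sup>2)
          * (\<Sum>r<d. \<Sum>x<a k. Re (sesq n M (slice a b (\<lambda>i. w (r*d+i)) k x) (slice a b (\<lambda>i. w (r*d+i)) k x))))"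
    by (rule sum_mono) (rule sesq_contr_le[OF assms])
  also have "\<dots> = block_mass v d a b k * (\<Sum>r<d. \<Sum>x<a k. Re (sesq n M (slice a b (\<lambda>i. w (r*d+i)) k x) (slice a b (\<lambda>i. w (r*d+i)) k x)))"
    unfolding block_mass_def by (simp add: sum_distrib_right)
  finally show ?thesis .
qed

lemma Re_sesq_id_tensor_pure_le_mass:
  assumes A: "\<forall>k<K. \<delta> k \<in> states (b k)" and d: "d = off a b K"
  shows "Re (sesq (d*d) (entries (id_tensor d d (blockP K a b \<delta>) (outer (d*d) v))) w w)
    \<le> (\<Sum>k<K. block_mass v d a b k * (\<Sum>r<d. \<Sum>x<a k.
          Re (sesq (b k) (entries (\<delta> k)) (slice a b (\<lambda>i. w (r*d+i)) k x) (slice a b (\<lambda>i. w (r*d+i)) k x))))"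
  unfolding sesq_id_tensor_pure[OF block_states_props(1)[OF A] d] Re_sum
  using block_states_props(5)[OF A] by (intro sum_mono sum_sesq_contr_le) simp

text \<open>\<open>contr_row\<close> splits \<open>Z\<^sub>k\<^sub>l\<close> along the rows of block \<open>k\<close>; \<open>contr_col\<close> re-indexes the pieces
  by the index of \<open>v\<close> on \<open>A\<close>.\<close>
definition contr_row :: "complex vec \<Rightarrow> (nat \<Rightarrow> complex) \<Rightarrow> nat \<Rightarrow> (nat\<Rightarrow>nat) \<Rightarrow> (nat\<Rightarrow>nat) \<Rightarrow> nat \<Rightarrow> nat \<Rightarrow> nat \<Rightarrow> nat \<Rightarrow> nat \<Rightarrow> complex" where
  "contr_row v w d a b k y l x = (\<lambda>x2. \<Sum>r<d. cnj (amp v d a b r k y l) * slice a b (\<lambda>i. w (r*d+i)) k x x2)"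

definition contr_col :: "complex vec \<Rightarrow> (nat \<Rightarrow> complex) \<Rightarrow> nat \<Rightarrow> (nat\<Rightarrow>nat) \<Rightarrow> (nat\<Rightarrow>nat) \<Rightarrow> nat \<Rightarrow> nat \<Rightarrow> nat \<Rightarrow> nat \<Rightarrow> complex" where
  "contr_col v w d a b k i x = (\<lambda>x2. \<Sum>s<d. cnj (v $ (s*d+i)) * slice a b (\<lambda>j. w (s*d+j)) k x x2)"

lemma contr_row_eq_contr_col: "contr_row v w d a b k y l x = contr_col v w d a b k (off a b k + y * b k + l) x"
  unfolding contr_row_def contr_col_def amp_def ..

lemma contr_eq_sum_contr_row: "contr v w d a b k l = (\<lambda>x2. \<Sum>x<a k. contr_row v w d a b k x l x x2)"
  unfolding contr_def contr_row_def by (rule ext) (rule sum.swap)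

lemma sesq_contr_le_card: assumes P: "psd_kernel n M"
  shows "Re (sesq n M (contr v w d a b k l) (contr v w d a b k l))
    \<le> real (a k) * (\<Sum>x<a k. Re (sesq n M (contr_row v w d a b k x l x) (contr_row v w d a b k x l x)))"
  unfolding contr_eq_sum_contr_row using psd_kernel_sesq_sum_le[OF P, of "{..<a k}" "\<lambda>x. contr_row v w d a b k x l x"] by simp

lemma Re_sesq_id_tensor_pure_le_rows:
  assumes A: "\<forall>k<K. \<delta> k \<in> states (b k)" and d: "d = off a b K"
  shows "Re (sesq (d*d) (entries (id_tensor d d (blockP K a b \<delta>) (outer (d*d) v))) w w)
    \<le> (\<Sum>k<K. real (a k) * (\<Sum>l<b k. \<Sum>x<a k.
          Re (sesq (b k) (entries (\<delta> k)) (contr_row v w d a b k x l x) (contr_row v w d a b k x l x))))"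
proof -
  let ?s = "\<lambda>k u. Re (sesq (b k) (entries (\<delta> k)) u u)"
  have "Re (sesq (d*d) (entries (id_tensor d d (blockP K a b \<delta>) (outer (d*d) v))) w w)
      = (\<Sum>k<K. \<Sum>l<b k. ?s k (contr v w d a b k l))"
    unfolding sesq_id_tensor_pure[OF block_states_props(1)[OF A] d] Re_sum ..
  also have "\<dots> \<le> (\<Sum>k<K. \<Sum>l<b k. real (a k) * (\<Sum>x<a k. ?s k (contr_row v w d a b k x l x)))"
    using block_states_props(5)[OF A] by (intro sum_mono sesq_contr_le_card) simp
  finally show ?thesis by (simp add: sum_distrib_left)
qed

lemma sum_contr_row_le_contr_col: assumes P: "\<forall>k<K. psd_kernel (b k) (entries (\<delta> k))" and k: "k < K" and d: "d = off a b K"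
  shows "(\<Sum>l<b k. \<Sum>x<a k. Re (sesq (b k) (entries (\<delta> k)) (contr_row v w d a b k x l x) (contr_row v w d a b k x l x)))
    \<le> (\<Sum>x<a k. \<Sum>i<d. Re (sesq (b k) (entries (\<delta> k)) (contr_col v w d a b k i x) (contr_col v w d a b k i x)))"
proof -
  let ?f = "\<lambda>i x. Re (sesq (b k) (entries (\<delta> k)) (contr_col v w d a b k i x) (contr_col v w d a b k i x))"
  have f0: "0 \<le> ?f i x" for i x using P k psd_kernel_sesq_nonneg by blast
  have "(\<Sum>l<b k. \<Sum>x<a k. Re (sesq (b k) (entries (\<delta> k)) (contr_row v w d a b k x l x) (contr_row v w d a b k x l x)))
     = (\<Sum>x<a k. \<Sum>l<b k. ?f (off a b k + x * b k + l) x)"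
    unfolding contr_row_eq_contr_col by (rule sum.swap)
  also have "\<dots> \<le> (\<Sum>x<a k. \<Sum>i<d. ?f i x)"
  proof (rule sum_mono)
    fix x assume "x \<in> {..<a k}"
    have "(\<Sum>l<b k. ?f (off a b k + x * b k + l) x) \<le> (\<Sum>y<a k. \<Sum>l<b k. ?f (off a b k + y * b k + l) x)"
      by (rule member_le_sum[where f="\<lambda>y. \<Sum>l<b k. ?f (off a b k + y * b k + l) x", OF \<open>x \<in> {..<a k}\<close>])
         (auto intro: sum_nonneg f0)
    also have "\<dots> \<le> (\<Sum>k'<K. \<Sum>y<a k'. \<Sum>l<b k'. ?f (off a b k' + y * b k' + l) x)"
      by (rule member_le_sum[where f="\<lambda>k'. \<Sum>y<a k'. \<Sum>l<b k'. ?f (off a b k' + y * b k' + l) x"])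
         (use k in \<open>auto intro: sum_nonneg f0\<close>)
    also have "\<dots> = (\<Sum>i<d. ?f i x)" unfolding d sum_off_entries ..
    finally show "(\<Sum>l<b k. ?f (off a b k + x * b k + l) x) \<le> (\<Sum>i<d. ?f i x)" .
  qed
  finally show ?thesis .
qed

lemma sesq_contr_col: "sesq n M (contr_col v w d a b k i x) (contr_col v w d a b k i x)
  = (\<Sum>r<d. \<Sum>s<d. v $ (r*d+i) * cnj (v $ (s*d+i)) * sesq n M (slice a b (\<lambda>j. w (r*d+j)) k x) (slice a b (\<lambda>j. w (s*d+j)) k x))"
  unfolding contr_col_def
  by (simp add: sesq_sum_left sesq_sum_right sesq_scale_left sesq_scale_right sum_distrib_left mult.assoc)

lemma sum_sesq_contr_le_contr_col:
  assumes P: "\<forall>k<K. psd_kernel (b k) (entries (\<delta> k))" and k: "k < K" and d: "d = off a b K"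
  shows "(\<Sum>l<b k. Re (sesq (b k) (entries (\<delta> k)) (contr v w d a b k l) (contr v w d a b k l)))
    \<le> real (a k) * (\<Sum>x<a k. \<Sum>i<d. Re (sesq (b k) (entries (\<delta> k)) (contr_col v w d a b k i x) (contr_col v w d a b k i x)))"
proof -
  let ?s = "\<lambda>u. Re (sesq (b k) (entries (\<delta> k)) u u)"
  have "(\<Sum>l<b k. ?s (contr v w d a b k l)) \<le> (\<Sum>l<b k. real (a k) * (\<Sum>x<a k. ?s (contr_row v w d a b k x l x)))"
    by (rule sum_mono) (rule sesq_contr_le_card, use P k in blast)
  also have "\<dots> = real (a k) * (\<Sum>l<b k. \<Sum>x<a k. ?s (contr_row v w d a b k x l x))"
    by (simp add: sum_distrib_left)
  also have "\<dots> \<le> real (a k) * (\<Sum>x<a k. \<Sum>i<d. ?s (contr_col v w d a b k i x))"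
    by (rule mult_left_mono[OF sum_contr_row_le_contr_col[OF P k d]]) simp
  finally show ?thesis .
qed

section \<open>The four bounds\<close>

lemma Dmax_identity_bound:
  assumes A: "\<forall>k<K. \<delta> k \<in> states (b k)" and d: "d = off a b K" and \<psi>: "\<psi> \<in> pure_states (d*d)"
  shows "(INF \<sigma>\<in>states d. Dmax (id_tensor d d (blockP K a b \<delta>) \<psi>) (kron (1\<^sub>m d) \<sigma>))
     \<le> ereal (log 2 (real (Max (a ` {..<K}))))"
proof -
  obtain v where v: "\<psi> = outer (d*d) v" "(\<Sum>i<d*d. (cmod (v $ i))\<^sup>2) = 1"
    using pure_statesE[OF \<psi>] by blast
  note DF = block_states_props[OF A]
  have psdk: "\<And>k. k<K \<Longrightarrow> psd_kernel (b k) (entries (\<delta> k))" using DF(5) by blast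
  have dpos: "0 < off a b K" using v(2) d by (cases "off a b K") auto
  define c where "c = real (Max (a ` {..<K}))"
  have c0: "0 < c" and ca: "\<And>k. k<K \<Longrightarrow> real (a k) \<le> c"
    using Max_block_dims[OF dpos] unfolding c_def by auto
  define cc where "cc k = block_mass v d a b k / real (a k)" for k
  define \<sigma> where "\<sigma> = block_sigma K a b \<delta> cc"
  have cc0: "\<forall>k<K. 0 \<le> cc k" unfolding cc_def using block_mass_nonneg by simp
  have mass: "real (a k) * cc k = block_mass v d a b k" for k
    by (cases "a k = 0") (auto simp: cc_def block_mass_def)
  have mass_le: "block_mass v d a b k \<le> c * cc k" if "k < K" for k
    unfolding mass[symmetric] by (rule mult_right_mono[OF ca[OF that]]) (use cc0 that in auto)
  have "\<sigma> \<in> states (off a b K)" unfolding \<sigma>_def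
    by (rule block_sigma_states) (use A DF(4) cc0 sum_block_mass[OF d v(2)] in \<open>auto simp: mass\<close>)
  hence \<sigma>S: "\<sigma> \<in> states d" using d by simp
  hence \<sigma>c: "\<sigma> \<in> carrier_mat d d" unfolding states_def psd_def by simp
  let ?T = "id_tensor d d (blockP K a b \<delta>) \<psi>"
  let ?s = "\<lambda>k u. sesq (b k) (entries (\<delta> k)) u u"
  let ?W = "\<lambda>w r k x. slice a b (\<lambda>i. w (r*d+i)) k x"
  have \<sigma>_form: "sesq (d*d) (entries (kron (1\<^sub>m d) \<sigma>)) w w
      = (\<Sum>r<d. \<Sum>k<K. complex_of_real (cc k) * (\<Sum>x<a k. ?s k (?W w r k x)))" for w
    unfolding sesq_kron_one[OF \<sigma>c] unfolding \<sigma>_def d sesq_block_sigma[OF DF(1) DF(4)] ..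
  have "Dmax ?T (kron (1\<^sub>m d) \<sigma>) \<le> ereal (log 2 c)"
  proof (rule Dmax_le_log_of_sesq_le[OF c0])
    show "dim_row ?T = d*d" by (simp add: id_tensor_def)
    fix w
    show "Im (sesq (d*d) (entries (kron (1\<^sub>m d) \<sigma>)) w w) = 0"
      unfolding \<sigma>_form Im_sum using psdk psd_kernel_def by simp
    show "Im (sesq (d*d) (entries ?T) w w) = 0"
      unfolding v(1) by (rule Im_sesq_id_tensor_pure[OF A d])
    have "Re (sesq (d*d) (entries ?T) w w)
        \<le> (\<Sum>k<K. block_mass v d a b k * (\<Sum>r<d. \<Sum>x<a k. Re (?s k (?W w r k x))))"
      unfolding v(1) by (rule Re_sesq_id_tensor_pure_le_mass[OF A d])
    also have "\<dots> \<le> (\<Sum>k<K. c * cc k * (\<Sum>r<d. \<Sum>x<a k. Re (?s k (?W w r k x))))"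
      using psd_kernel_sesq_nonneg[OF psdk] mass_le by (intro sum_mono mult_right_mono sum_nonneg) auto
    also have "\<dots> = c * Re (sesq (d*d) (entries (kron (1\<^sub>m d) \<sigma>)) w w)"
      unfolding \<sigma>_form Re_sum
      by (simp add: sum_distrib_left sum_distrib_right mult_ac sum.swap[of _ "{..<d}"])
    finally show "Re (sesq (d*d) (entries ?T) w w) \<le> c * Re (sesq (d*d) (entries (kron (1\<^sub>m d) \<sigma>)) w w)" .
  qed
  thus ?thesis unfolding c_def[symmetric] by (rule INF_lower2[OF \<sigma>S])
qed

definition cq_mat :: "nat \<Rightarrow> nat \<Rightarrow> (nat \<Rightarrow> real) \<Rightarrow> (nat \<Rightarrow> complex mat) \<Rightarrow> complex mat" where
  "cq_mat nM d p rs = mat (nM * d) (nM * d) (\<lambda>(i, j). \<Sum>m<nM. complex_of_real (p m) * kron (ketbra nM m) (rs m) $$ (i, j))"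

lemma cq_statesE: assumes "(nM, \<rho>) \<in> cq_states d"
  obtains p rs where "\<forall>m<nM. 0 \<le> p m \<and> rs m \<in> states d" "(\<Sum>m<nM. p m) = 1" "\<rho> = cq_mat nM d p rs"
  using assms unfolding cq_states_def cq_mat_def by blast

lemma cq_index: assumes rs: "\<forall>m<nM. rs m \<in> carrier_mat d d"
  and "m1 < nM" "m2 < nM" "i < d" "j < d"
  shows "cq_mat nM d p rs $$ (m1*d+i, m2*d+j)
    = (if m1 = m2 then complex_of_real (p m1) * rs m1 $$ (i,j) else 0)"
proof -
  have lt: "m1*d+i < nM*d" "m2*d+j < nM*d" using assms mult_add_less_mult by auto
  have "cq_mat nM d p rs $$ (m1*d+i, m2*d+j)
      = (\<Sum>m<nM. complex_of_real (p m) * ((if m1 = m \<and> m2 = m then 1 else 0) * rs m $$ (i,j)))"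
  proof -
    have "kron (ketbra nM m) (rs m) $$ (m1*d+i, m2*d+j) = (if m1 = m \<and> m2 = m then 1 else 0) * rs m $$ (i,j)" if "m < nM" for m
    proof -
      have "kron (ketbra nM m) (rs m) $$ (m1*d+i, m2*d+j) = ketbra nM m $$ (m1, m2) * rs m $$ (i,j)"
        by (rule kron_index) (use assms that in \<open>auto simp: ketbra_def\<close>)
      thus ?thesis using assms by (simp add: ketbra_def)
    qed
    thus ?thesis using lt by (simp add: cq_mat_def)
  qed
  also have "\<dots> = (if m1 = m2 then complex_of_real (p m1) * rs m1 $$ (i,j) else 0)"
    using assms(2) by (cases "m1 = m2") (auto simp: if_zero_mult_distrib intro!: sum.neutral)
  finally show ?thesis .
qed

lemma ptrace2_cq_mat:
  assumes rs: "\<forall>m<nM. rs m \<in> states d" and m: "m1 < nM" "m2 < nM"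
  shows "ptrace2 nM d (cq_mat nM d p rs) $$ (m1, m2) = (if m1 = m2 then complex_of_real (p m1) else 0)"
proof -
  have rsc: "\<forall>m<nM. rs m \<in> carrier_mat d d" using rs unfolding states_def psd_def by auto
  have "ptrace2 nM d (cq_mat nM d p rs) $$ (m1, m2)
      = (\<Sum>l<d. if m1 = m2 then complex_of_real (p m1) * rs m1 $$ (l,l) else 0)"
    unfolding ptrace2_index[OF m] by (intro sum.cong refl) (simp add: cq_index[OF rsc m])
  also have "\<dots> = (if m1 = m2 then complex_of_real (p m1) * tr (rs m1) else 0)"
    using rsc m unfolding tr_def by (auto simp: sum_distrib_left)
  finally show ?thesis using rs m unfolding states_def by simp
qed

lemma sesq_kron_ptrace2_cq_mat:
  assumes rs: "\<forall>m<nM. rs m \<in> states d" and \<sigma>: "\<sigma> \<in> carrier_mat d d"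
  shows "sesq (nM*d) (entries (kron (ptrace2 nM d (cq_mat nM d p rs)) \<sigma>)) w w
    = (\<Sum>m<nM. complex_of_real (p m) * sesq d (entries \<sigma>) (\<lambda>i. w (m*d+i)) (\<lambda>i. w (m*d+i)))"
proof -
  have "ptrace2 nM d (cq_mat nM d p rs) \<in> carrier_mat nM nM" by (simp add: ptrace2_def)
  hence "sesq (nM*d) (entries (kron (ptrace2 nM d (cq_mat nM d p rs)) \<sigma>)) w w
      = (\<Sum>m1<nM. \<Sum>m2<nM. ptrace2 nM d (cq_mat nM d p rs) $$ (m1,m2) * sesq d (entries \<sigma>) (\<lambda>i. w (m1*d+i)) (\<lambda>i. w (m2*d+i)))"
    by (rule sesq_kron[OF _ \<sigma>])
  also have "\<dots> = (\<Sum>m1<nM. \<Sum>m2<nM. if m1 = m2 then complex_of_real (p m1) * sesq d (entries \<sigma>) (\<lambda>i. w (m1*d+i)) (\<lambda>i. w (m1*d+i)) else 0)"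
    by (intro sum.cong refl) (simp add: ptrace2_cq_mat[OF rs])
  finally show ?thesis by (simp only: sum_if_eq_diag)
qed

lemma block_ptrace_cq_mat_block:
  assumes rs: "\<forall>m<nM. rs m \<in> carrier_mat d d" and d: "d = off a b K"
    and "m1 < nM" "m2 < nM" "k < K" "x < a k" "y < a k"
  shows "block_ptrace a b k (entries (mat d d (\<lambda>(x,y). cq_mat nM d p rs $$ (m1*d+x, m2*d+y)))) x y
      = (if m1 = m2 then complex_of_real (p m1) * block_ptrace a b k (entries (rs m1)) x y else 0)"
proof -
  have lt: "off a b k + z * b k + l < d" if "z < a k" "l < b k" for z l
    using off_index_less(2)[where K=K and a=a and b=b, OF \<open>k < K\<close> that] d by simp
  show ?thesis unfolding block_ptrace_def entries_def
    using assms(3-7) lt by (auto simp: cq_index[OF rs] sum_distrib_left intro!: sum.neutral)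
qed

lemma sesq_id_tensor_cq_mat:
  assumes dc: "\<forall>k<K. \<delta> k \<in> carrier_mat (b k) (b k)" and d: "d = off a b K"
    and rs: "\<forall>m<nM. rs m \<in> carrier_mat d d"
  shows "sesq (nM*d) (entries (id_tensor nM d (blockP K a b \<delta>) (cq_mat nM d p rs))) w w
    = (\<Sum>m<nM. complex_of_real (p m) * sesq d (entries (blockP K a b \<delta> (rs m))) (\<lambda>i. w (m*d+i)) (\<lambda>i. w (m*d+i)))"
proof -
  let ?P = "blockP K a b \<delta>"
  let ?B = "\<lambda>m1 m2. mat d d (\<lambda>(x,y). cq_mat nM d p rs $$ (m1*d+x, m2*d+y))"
  have "sesq d (entries (?P (?B m1 m2))) u u'
      = (if m1 = m2 then complex_of_real (p m1) * sesq d (entries (?P (rs m1))) u u' else 0)"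
    if m: "m1 < nM" "m2 < nM" for m1 m2 u u'
  proof -
    let ?S = "\<lambda>k x y. sesq (b k) (entries (\<delta> k)) (slice a b u k x) (slice a b u' k y)"
    have "sesq d (entries (?P (?B m1 m2))) u u'
       = (\<Sum>k<K. \<Sum>x<a k. \<Sum>y<a k. block_ptrace a b k (entries (?B m1 m2)) x y * ?S k x y)"
      unfolding d by (rule sesq_blockP[OF dc])
    also have "\<dots> = (\<Sum>k<K. \<Sum>x<a k. \<Sum>y<a k. (if m1 = m2 then complex_of_real (p m1) * (block_ptrace a b k (entries (rs m1)) x y * ?S k x y) else 0))"
      by (intro sum.cong refl) (simp add: block_ptrace_cq_mat_block[OF rs d m])
    also have "\<dots> = (if m1 = m2 then complex_of_real (p m1) * (\<Sum>k<K. \<Sum>x<a k. \<Sum>y<a k. block_ptrace a b k (entries (rs m1)) x y * ?S k x y) else 0)"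
      by (cases "m1 = m2") (simp_all add: sum_distrib_left)
    also have "(\<Sum>k<K. \<Sum>x<a k. \<Sum>y<a k. block_ptrace a b k (entries (rs m1)) x y * ?S k x y) = sesq d (entries (?P (rs m1))) u u'"
      unfolding d by (rule sesq_blockP[OF dc, symmetric])
    finally show ?thesis .
  qed
  hence "sesq (nM*d) (entries (id_tensor nM d ?P (cq_mat nM d p rs))) w w
      = (\<Sum>m1<nM. \<Sum>m2<nM. if m1 = m2 then complex_of_real (p m1) * sesq d (entries (?P (rs m1))) (\<lambda>i. w (m1*d+i)) (\<lambda>i. w (m1*d+i)) else 0)"
    unfolding sesq_id_tensor by (intro sum.cong refl) simp
  thus ?thesis by (simp only: sum_if_eq_diag)
qed

lemma Im_sesq_id_tensor_cq_mat:
  assumes A: "\<forall>k<K. \<delta> k \<in> states (b k)" and d: "d = off a b K" and rs: "\<forall>m<nM. rs m \<in> states d"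
  shows "Im (sesq (nM*d) (entries (id_tensor nM d (blockP K a b \<delta>) (cq_mat nM d p rs))) w w) = 0"
proof -
  have rsc: "\<forall>m<nM. rs m \<in> carrier_mat d d" using rs unfolding states_def psd_def by auto
  show ?thesis
    unfolding sesq_id_tensor_cq_mat[OF block_states_props(1)[OF A] d rsc] Im_sum
    using Im_sesq_blockP[OF A d] rs by (simp add: states_def psd_kernel_of_psd)
qed

lemma Re_sesq_id_tensor_cq_mat_le:
  assumes A: "\<forall>k<K. \<delta> k \<in> states (b k)" and d: "d = off a b K"
    and prs: "\<forall>m<nM. 0 \<le> p m \<and> rs m \<in> states d"
  shows "Re (sesq (nM*d) (entries (id_tensor nM d (blockP K a b \<delta>) (cq_mat nM d p rs))) w w)
    \<le> (\<Sum>m<nM. p m * (\<Sum>k<K. \<Sum>x<a k. Re (sesq (b k) (entries (\<delta> k))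
          (slice a b (\<lambda>i. w (m*d+i)) k x) (slice a b (\<lambda>i. w (m*d+i)) k x))))"
proof -
  have rsc: "\<forall>m<nM. rs m \<in> carrier_mat d d" using prs unfolding states_def psd_def by auto
  have "Re (sesq (nM*d) (entries (id_tensor nM d (blockP K a b \<delta>) (cq_mat nM d p rs))) w w)
      = (\<Sum>m<nM. p m * Re (sesq d (entries (blockP K a b \<delta> (rs m))) (\<lambda>i. w (m*d+i)) (\<lambda>i. w (m*d+i))))"
    unfolding sesq_id_tensor_cq_mat[OF block_states_props(1)[OF A] d rsc] Re_sum by simp
  also have "\<dots> \<le> (\<Sum>m<nM. p m * (\<Sum>k<K. \<Sum>x<a k. Re (sesq (b k) (entries (\<delta> k))
          (slice a b (\<lambda>i. w (m*d+i)) k x) (slice a b (\<lambda>i. w (m*d+i)) k x))))"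
    by (rule sum_mono) (use prs Re_sesq_blockP_state_le[OF A d] in \<open>auto intro: mult_left_mono\<close>)
  finally show ?thesis .
qed

lemma Dmax_cq_bound:
  assumes A: "\<forall>k<K. \<delta> k \<in> states (b k)" and d: "d = off a b K" and \<rho>: "(nM, \<rho>) \<in> cq_states d"
  shows "(INF \<sigma>\<in>states d. Dmax (id_tensor nM d (blockP K a b \<delta>) \<rho>) (kron (ptrace2 nM d \<rho>) \<sigma>))
     \<le> ereal (log 2 (\<Sum>k<K. real (a k)))"
proof -
  obtain p rs where prs: "\<forall>m<nM. 0 \<le> p m \<and> rs m \<in> states d" and p1: "(\<Sum>m<nM. p m) = 1"
    and \<rho>_eq: "\<rho> = cq_mat nM d p rs"
    using cq_statesE[OF \<rho>] by blast
  note DF = block_states_props[OF A]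
  have rs: "\<forall>m<nM. rs m \<in> states d" using prs by blast
  have "0 < nM" using p1 by (cases nM) auto
  hence "0 < off a b K" using rs d states_dim_pos by blast
  then obtain k0 where k0: "k0 < K" "0 < a k0" using ex_block_pos by blast
  define S where "S = (\<Sum>k<K. real (a k))"
  have S0: "0 < S" unfolding S_def by (rule sum_pos2[of _ k0]) (use k0 in auto)
  define \<sigma> where "\<sigma> = block_sigma K a b \<delta> (\<lambda>_. 1 / S)"
  have "\<sigma> \<in> states (off a b K)" unfolding \<sigma>_def
  proof (rule block_sigma_states)
    show "(\<Sum>k<K. real (a k) * (1 / S)) = 1" using S0 by (simp add: sum_divide_distrib[symmetric] S_def)
  qed (use A DF(4) S0 in auto)
  hence \<sigma>S: "\<sigma> \<in> states d" using d by simp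
  hence \<sigma>c: "\<sigma> \<in> carrier_mat d d" unfolding states_def psd_def by simp
  have \<sigma>p: "psd_kernel d (entries \<sigma>)" using \<sigma>S unfolding states_def by (auto intro: psd_kernel_of_psd)
  let ?T = "id_tensor nM d (blockP K a b \<delta>) \<rho>"
  let ?w = "\<lambda>w m i. w (m*d+i)"
  let ?R = "\<lambda>u. \<Sum>k<K. \<Sum>x<a k. Re (sesq (b k) (entries (\<delta> k)) (slice a b u k x) (slice a b u k x))"
  have \<sigma>_form: "sesq (nM*d) (entries (kron (ptrace2 nM d \<rho>) \<sigma>)) w w
      = (\<Sum>m<nM. complex_of_real (p m) * sesq d (entries \<sigma>) (?w w m) (?w w m))" for w
    unfolding \<rho>_eq by (rule sesq_kron_ptrace2_cq_mat[OF rs \<sigma>c])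
  have \<sigma>_block: "S * Re (sesq d (entries \<sigma>) u u) = ?R u" for u
    unfolding \<sigma>_def d sesq_block_sigma[OF DF(1) DF(4)] using S0 by (simp add: Re_sum sum_distrib_left)
  have "Dmax ?T (kron (ptrace2 nM d \<rho>) \<sigma>) \<le> ereal (log 2 S)"
  proof (rule Dmax_le_log_of_sesq_le[OF S0])
    show "dim_row ?T = nM*d" by (simp add: id_tensor_def)
    fix w
    show "Im (sesq (nM*d) (entries (kron (ptrace2 nM d \<rho>) \<sigma>)) w w) = 0"
      unfolding \<sigma>_form Im_sum using \<sigma>p unfolding psd_kernel_def by simp
    show "Im (sesq (nM*d) (entries ?T) w w) = 0"
      unfolding \<rho>_eq by (rule Im_sesq_id_tensor_cq_mat[OF A d rs])
    have "Re (sesq (nM*d) (entries ?T) w w) \<le> (\<Sum>m<nM. p m * ?R (?w w m))"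
      unfolding \<rho>_eq by (rule Re_sesq_id_tensor_cq_mat_le[OF A d prs])
    also have "\<dots> = S * Re (sesq (nM*d) (entries (kron (ptrace2 nM d \<rho>) \<sigma>)) w w)"
      unfolding \<sigma>_form Re_sum \<sigma>_block[symmetric] by (simp add: sum_distrib_left mult_ac)
    finally show "Re (sesq (nM*d) (entries ?T) w w) \<le> S * Re (sesq (nM*d) (entries (kron (ptrace2 nM d \<rho>) \<sigma>)) w w)" .
  qed
  thus ?thesis unfolding S_def by (rule INF_lower2[OF \<sigma>S])
qed

lemma sesq_kron_marginal_block_sigma: assumes dc: "\<forall>k<K. \<delta> k \<in> carrier_mat (b k) (b k)" and bp: "\<forall>k<K. 0 < b k"
  and d: "d = off a b K"
  shows "sesq (d*d) (entries (kron (ptrace2 d d (outer (d*d) v)) (block_sigma K a b \<delta> cc))) w w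
    = (\<Sum>k<K. complex_of_real (cc k) * (\<Sum>x<a k. \<Sum>i<d. sesq (b k) (entries (\<delta> k)) (contr_col v w d a b k i x) (contr_col v w d a b k i x)))"
proof -
  let ?A = "\<lambda>r s i. v $ (r*d+i) * cnj (v $ (s*d+i))"
  let ?S = "\<lambda>r s k x. sesq (b k) (entries (\<delta> k)) (slice a b (\<lambda>j. w (r*d+j)) k x) (slice a b (\<lambda>j. w (s*d+j)) k x)"
  let ?C = "\<lambda>k. complex_of_real (cc k)"
  have c1: "ptrace2 d d (outer (d*d) v) \<in> carrier_mat d d" by (simp add: ptrace2_def)
  have c2: "block_sigma K a b \<delta> cc \<in> carrier_mat d d" by (rule carrier_matI) (simp_all add: block_sigma_def d)
  have "sesq (d*d) (entries (kron (ptrace2 d d (outer (d*d) v)) (block_sigma K a b \<delta> cc))) w w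
     = (\<Sum>r<d. \<Sum>s<d. ptrace2 d d (outer (d*d) v) $$ (r,s) * sesq d (entries (block_sigma K a b \<delta> cc)) (\<lambda>i. w (r*d+i)) (\<lambda>i. w (s*d+i)))"
    by (rule sesq_kron[OF c1 c2])
  also have "\<dots> = (\<Sum>r<d. \<Sum>s<d. (\<Sum>i<d. ?A r s i) * (\<Sum>k<K. ?C k * (\<Sum>x<a k. ?S r s k x)))"
    by (intro sum.cong refl) (simp add: ptrace2_outer d sesq_block_sigma[OF dc bp] slice_def)
  also have "\<dots> = (\<Sum>r<d. \<Sum>s<d. \<Sum>k<K. \<Sum>x<a k. \<Sum>i<d. ?C k * (?A r s i * ?S r s k x))"
    by (simp add: sum_distrib_left sum_distrib_right mult_ac)
  also have "\<dots> = (\<Sum>k<K. \<Sum>r<d. \<Sum>s<d. \<Sum>x<a k. \<Sum>i<d. ?C k * (?A r s i * ?S r s k x))"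
    by (simp only: sum.swap[where B="{..<K}"])
  also have "\<dots> = (\<Sum>k<K. ?C k * (\<Sum>x<a k. \<Sum>i<d. \<Sum>r<d. \<Sum>s<d. ?A r s i * ?S r s k x))"
  proof (rule sum.cong[OF refl])
    fix k
    have "(\<Sum>r<d. \<Sum>s<d. \<Sum>x<a k. \<Sum>i<d. ?C k * (?A r s i * ?S r s k x))
       = (\<Sum>x<a k. \<Sum>r<d. \<Sum>s<d. \<Sum>i<d. ?C k * (?A r s i * ?S r s k x))"
      by (simp only: sum.swap[where B="{..<a k}"])
    also have "\<dots> = (\<Sum>x<a k. \<Sum>r<d. \<Sum>i<d. \<Sum>s<d. ?C k * (?A r s i * ?S r s k x))"
      by (rule sum.cong[OF refl], rule sum.cong[OF refl], rule sum.swap)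
    also have "\<dots> = (\<Sum>x<a k. \<Sum>i<d. \<Sum>r<d. \<Sum>s<d. ?C k * (?A r s i * ?S r s k x))"
      by (rule sum.cong[OF refl]) (rule sum.swap)
    also have "\<dots> = ?C k * (\<Sum>x<a k. \<Sum>i<d. \<Sum>r<d. \<Sum>s<d. ?A r s i * ?S r s k x)"
      by (simp add: sum_distrib_left)
    finally show "(\<Sum>r<d. \<Sum>s<d. \<Sum>x<a k. \<Sum>i<d. ?C k * (?A r s i * ?S r s k x))
       = ?C k * (\<Sum>x<a k. \<Sum>i<d. \<Sum>r<d. \<Sum>s<d. ?A r s i * ?S r s k x)" .
  qed
  also have "\<dots> = (\<Sum>k<K. complex_of_real (cc k) * (\<Sum>x<a k. \<Sum>i<d. sesq (b k) (entries (\<delta> k)) (contr_col v w d a b k i x) (contr_col v w d a b k i x)))"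
    unfolding sesq_contr_col by (simp add: mult.assoc)
  finally show ?thesis .
qed

lemma Dmax_marginal_bound:
  assumes A: "\<forall>k<K. \<delta> k \<in> states (b k)" and d: "d = off a b K" and \<psi>: "\<psi> \<in> pure_states (d*d)"
  shows "(INF \<sigma>\<in>states d. Dmax (id_tensor d d (blockP K a b \<delta>) \<psi>) (kron (ptrace2 d d \<psi>) \<sigma>))
     \<le> ereal (log 2 (\<Sum>k<K. (real (a k))\<^sup>2))"
proof -
  obtain v where v: "\<psi> = outer (d*d) v" "(\<Sum>i<d*d. (cmod (v $ i))\<^sup>2) = 1"
    using pure_statesE[OF \<psi>] by blast
  note DF = block_states_props[OF A]
  have psdk: "\<And>k. k<K \<Longrightarrow> psd_kernel (b k) (entries (\<delta> k))" using DF(5) by blast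
  have dpos: "0 < off a b K" using v(2) d by (cases "off a b K") auto
  define S where "S = (\<Sum>k<K. (real (a k))\<^sup>2)"
  obtain k0 where k0: "k0 < K" "0 < a k0" using ex_block_pos[OF dpos] by blast
  have S0: "0 < S" unfolding S_def by (rule sum_pos2[of _ k0]) (use k0 in auto)
  define cc where "cc k = real (a k) / S" for k
  define \<sigma> where "\<sigma> = block_sigma K a b \<delta> cc"
  have "(\<Sum>k<K. real (a k) * cc k) = 1"
    unfolding cc_def using S0 by (simp add: sum_divide_distrib[symmetric] power2_eq_square S_def)
  hence "\<sigma> \<in> states (off a b K)" unfolding \<sigma>_def
    by (intro block_sigma_states) (use A DF(4) S0 in \<open>auto simp: cc_def\<close>)
  hence \<sigma>S: "\<sigma> \<in> states d" using d by simp
  let ?T = "id_tensor d d (blockP K a b \<delta>) \<psi>"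
  let ?s = "\<lambda>k u. sesq (b k) (entries (\<delta> k)) u u"
  have \<sigma>_form: "sesq (d*d) (entries (kron (ptrace2 d d \<psi>) \<sigma>)) w w
      = (\<Sum>k<K. complex_of_real (cc k) * (\<Sum>x<a k. \<Sum>i<d. ?s k (contr_col v w d a b k i x)))" for w
    unfolding v(1) \<sigma>_def by (rule sesq_kron_marginal_block_sigma[OF DF(1) DF(4) d])
  have T_form: "sesq (d*d) (entries ?T) w w = (\<Sum>k<K. \<Sum>l<b k. ?s k (contr v w d a b k l))" for w
    unfolding v(1) by (rule sesq_id_tensor_pure[OF DF(1) d])
  have "Dmax ?T (kron (ptrace2 d d \<psi>) \<sigma>) \<le> ereal (log 2 S)"
  proof (rule Dmax_le_log_of_sesq_le[OF S0])
    show "dim_row ?T = d*d" by (simp add: id_tensor_def)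
    fix w
    show "Im (sesq (d*d) (entries (kron (ptrace2 d d \<psi>) \<sigma>)) w w) = 0"
      unfolding \<sigma>_form Im_sum using psdk psd_kernel_def by (simp add: Im_sum)
    show "Im (sesq (d*d) (entries ?T) w w) = 0"
      unfolding v(1) by (rule Im_sesq_id_tensor_pure[OF A d])
    have "Re (sesq (d*d) (entries ?T) w w) = (\<Sum>k<K. \<Sum>l<b k. Re (?s k (contr v w d a b k l)))"
      unfolding T_form Re_sum ..
    also have "\<dots> \<le> (\<Sum>k<K. S * cc k * (\<Sum>x<a k. \<Sum>i<d. Re (?s k (contr_col v w d a b k i x))))"
      using sum_sesq_contr_le_contr_col[OF DF(5) _ d] S0 by (intro sum_mono) (simp add: cc_def)
    also have "\<dots> = S * Re (sesq (d*d) (entries (kron (ptrace2 d d \<psi>) \<sigma>)) w w)"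
      unfolding \<sigma>_form Re_sum by (simp add: sum_distrib_left mult_ac)
    finally show "Re (sesq (d*d) (entries ?T) w w) \<le> S * Re (sesq (d*d) (entries (kron (ptrace2 d d \<psi>) \<sigma>)) w w)" .
  qed
  thus ?thesis unfolding S_def by (rule INF_lower2[OF \<sigma>S])
qed

definition col_weight :: "complex vec \<Rightarrow> nat \<Rightarrow> nat \<Rightarrow> real" where
  "col_weight v d j = (\<Sum>r<d. (cmod (v $ (r*d+j)))\<^sup>2)"

definition col_state :: "complex vec \<Rightarrow> nat \<Rightarrow> nat \<Rightarrow> complex mat" where
  "col_state v d j = (if col_weight v d j = 0 then ketbra d 0
     else mat d d (\<lambda>(r,s). v $ (r*d+j) * cnj (v $ (s*d+j)) / complex_of_real (col_weight v d j)))"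

text \<open>The separable comparison state \<open>\<Sum>\<^sub>j \<langle>j|\<^sub>A \<psi> |j\<rangle>\<^sub>A \<otimes> \<P>(|j\<rangle>\<langle>j|)\<close>;
  \<open>ketbra d 0\<close> is only a placeholder for columns of weight zero.\<close>
definition sep_witness :: "nat \<Rightarrow> (nat\<Rightarrow>nat) \<Rightarrow> (nat\<Rightarrow>nat) \<Rightarrow> (nat \<Rightarrow> complex mat) \<Rightarrow> complex vec \<Rightarrow> nat \<Rightarrow> complex mat" where
  "sep_witness K a b \<delta> v d = mat (d*d) (d*d) (\<lambda>(x,y). \<Sum>j<d.
     complex_of_real (col_weight v d j) * kron (col_state v d j) (blockP K a b \<delta> (ketbra d j)) $$ (x,y))"

lemma sep_witness_sep_states:
  assumes A: "\<forall>k<K. \<delta> k \<in> states (b k)" and d: "d = off a b K"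
    and v: "(\<Sum>i<d*d. (cmod (v $ i))\<^sup>2) = 1"
  shows "sep_witness K a b \<delta> v d \<in> sep_states d d"
proof -
  have d0: "0 < d" using v by (cases d) auto
  have col: "col_state v d j \<in> states d" for j
  proof (cases "col_weight v d j = 0")
    case True
    have "diag_mat d (\<lambda>i. if i = 0 then 1 else 0) \<in> states d" by (rule diag_mat_states) (use d0 in auto)
    thus ?thesis using True unfolding col_state_def ketbra_eq_diag_mat by simp
  next
    case False
    thus ?thesis unfolding col_state_def
      using rank_one_states[where c="col_weight v d j" and n=d and \<alpha>="\<lambda>r. v $ (r*d+j)"] col_weight_def by simp
  qed
  have blk: "blockP K a b \<delta> (ketbra d j) \<in> states d" if "j < d" for j
    unfolding ketbra_eq_diag_mat by (rule blockP_diag_mat_states[OF A d]) (use that in auto)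
  have "(\<Sum>j<d. col_weight v d j) = (\<Sum>r<d. \<Sum>j<d. (cmod (v $ (r*d+j)))\<^sup>2)"
    unfolding col_weight_def by (rule sum.swap)
  also have "\<dots> = 1" using v by (simp add: sum_lessThan_mult)
  finally have "(\<Sum>j<d. col_weight v d j) = 1" .
  then show ?thesis
    unfolding sep_states_def sep_witness_def
    by (intro CollectI exI[of _ d] exI[of _ "col_weight v d"] exI[of _ "col_state v d"]
        exI[of _ "\<lambda>j. blockP K a b \<delta> (ketbra d j)"])
       (use col blk in \<open>auto simp: col_weight_def intro: sum_nonneg\<close>)
qed

lemma sesq_kron_col_state: assumes B: "B \<in> carrier_mat d d"
  shows "complex_of_real (col_weight v d j) * sesq (d*d) (entries (kron (col_state v d j) B)) w w
    = (\<Sum>r<d. \<Sum>s<d. v $ (r*d+j) * cnj (v $ (s*d+j)) * sesq d (entries B) (\<lambda>i. w (r*d+i)) (\<lambda>i. w (s*d+i)))"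
proof -
  have cs: "col_state v d j \<in> carrier_mat d d" by (simp add: col_state_def ketbra_def)
  have entry: "complex_of_real (col_weight v d j) * col_state v d j $$ (r,s) = v $ (r*d+j) * cnj (v $ (s*d+j))"
    if "r < d" "s < d" for r s
  proof (cases "col_weight v d j = 0")
    case True
    hence "\<forall>r<d. v $ (r*d+j) = 0" unfolding col_weight_def by (simp add: sum_nonneg_eq_0_iff)
    thus ?thesis using True that by simp
  next
    case False thus ?thesis using that unfolding col_state_def by simp
  qed
  show ?thesis
    unfolding sesq_kron[OF cs B] sum_distrib_left
    by (intro sum.cong refl) (simp add: mult.assoc[symmetric] entry)
qed

lemma sesq_blockP_ketbra_contr_col:
  assumes dc: "\<forall>k<K. \<delta> k \<in> carrier_mat (b k) (b k)" and d: "d = off a b K"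
  shows "(\<Sum>r<d. \<Sum>s<d. v $ (r*d+j) * cnj (v $ (s*d+j)) * sesq d (entries (blockP K a b \<delta> (ketbra d j))) (\<lambda>i. w (r*d+i)) (\<lambda>i. w (s*d+i)))
    = (\<Sum>k<K. \<Sum>x<a k. complex_of_real (\<Sum>l<b k. if off a b k + x * b k + l = j then 1 else 0)
        * sesq (b k) (entries (\<delta> k)) (contr_col v w d a b k j x) (contr_col v w d a b k j x))"
proof -
  let ?A = "\<lambda>r s. v $ (r*d+j) * cnj (v $ (s*d+j))"
  let ?S = "\<lambda>r s k x. sesq (b k) (entries (\<delta> k)) (slice a b (\<lambda>i. w (r*d+i)) k x) (slice a b (\<lambda>i. w (s*d+i)) k x)"
  let ?N = "\<lambda>k x. complex_of_real (\<Sum>l<b k. if off a b k + x * b k + l = j then 1 else 0)"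
  have "(\<Sum>r<d. \<Sum>s<d. ?A r s * sesq d (entries (blockP K a b \<delta> (ketbra d j))) (\<lambda>i. w (r*d+i)) (\<lambda>i. w (s*d+i)))
     = (\<Sum>r<d. \<Sum>s<d. \<Sum>k<K. \<Sum>x<a k. ?N k x * (?A r s * ?S r s k x))"
    unfolding ketbra_eq_diag_mat sesq_blockP_diag_mat[OF dc d] by (simp add: sum_distrib_left slice_def mult_ac)
  also have "\<dots> = (\<Sum>k<K. \<Sum>x<a k. ?N k x * (\<Sum>r<d. \<Sum>s<d. ?A r s * ?S r s k x))"
  proof -
    have "(\<Sum>r<d. \<Sum>s<d. \<Sum>k<K. \<Sum>x<a k. ?N k x * (?A r s * ?S r s k x))
        = (\<Sum>k<K. \<Sum>r<d. \<Sum>s<d. \<Sum>x<a k. ?N k x * (?A r s * ?S r s k x))"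
      by (simp only: sum.swap[where B="{..<K}"])
    also have "\<dots> = (\<Sum>k<K. \<Sum>x<a k. \<Sum>r<d. \<Sum>s<d. ?N k x * (?A r s * ?S r s k x))"
      by (rule sum.cong[OF refl]) (simp only: sum.swap[where B="{..<a _}"])
    finally show ?thesis by (simp add: sum_distrib_left)
  qed
  also have "\<dots> = (\<Sum>k<K. \<Sum>x<a k. ?N k x * sesq (b k) (entries (\<delta> k)) (contr_col v w d a b k j x) (contr_col v w d a b k j x))"
    unfolding sesq_contr_col slice_def ..
  finally show ?thesis .
qed

lemma sesq_sep_witness:
  assumes dc: "\<forall>k<K. \<delta> k \<in> carrier_mat (b k) (b k)" and d: "d = off a b K"
  shows "sesq (d*d) (entries (sep_witness K a b \<delta> v d)) w w
    = (\<Sum>k<K. \<Sum>x<a k. \<Sum>l<b k. sesq (b k) (entries (\<delta> k)) (contr_row v w d a b k x l x) (contr_row v w d a b k x l x))"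
proof -
  let ?N = "\<lambda>j k x. complex_of_real (\<Sum>l<b k. if off a b k + x * b k + l = j then 1 else 0)"
  let ?H = "\<lambda>k j x. sesq (b k) (entries (\<delta> k)) (contr_col v w d a b k j x) (contr_col v w d a b k j x)"
  have blk: "blockP K a b \<delta> (ketbra d j) \<in> carrier_mat d d" for j by (rule carrier_matI) (simp_all add: d)
  have "sesq (d*d) (entries (sep_witness K a b \<delta> v d)) w w
     = sesq (d*d) (\<lambda>x y. \<Sum>j<d. complex_of_real (col_weight v d j)
         * entries (kron (col_state v d j) (blockP K a b \<delta> (ketbra d j))) x y) w w"
    unfolding sep_witness_def by (rule sesq_cong_kernel) (simp add: entries_def)
  also have "\<dots> = (\<Sum>j<d. \<Sum>k<K. \<Sum>x<a k. ?N j k x * ?H k j x)"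
    by (simp add: sesq_sum_kernel sesq_scale_kernel sesq_kron_col_state[OF blk]
        sesq_blockP_ketbra_contr_col[OF dc d])
  also have "\<dots> = (\<Sum>k<K. \<Sum>j<d. \<Sum>x<a k. ?N j k x * ?H k j x)"
    by (rule sum.swap)
  also have "\<dots> = (\<Sum>k<K. \<Sum>x<a k. \<Sum>j<d. ?N j k x * ?H k j x)"
    by (rule sum.cong[OF refl], rule sum.swap)
  also have "\<dots> = (\<Sum>k<K. \<Sum>x<a k. \<Sum>l<b k. sesq (b k) (entries (\<delta> k)) (contr_row v w d a b k x l x) (contr_row v w d a b k x l x))"
  proof (rule sum.cong[OF refl], rule sum.cong[OF refl])
    fix k x assume k: "k \<in> {..<K}" and x: "x \<in> {..<a k}"
    have "(\<Sum>j<d. ?N j k x * ?H k j x)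
      = (\<Sum>l<b k. if off a b k + x * b k + l < d then ?H k (off a b k + x * b k + l) x else 0)"
      by (rule sum_indicator_pick)
    also have "\<dots> = (\<Sum>l<b k. sesq (b k) (entries (\<delta> k)) (contr_row v w d a b k x l x) (contr_row v w d a b k x l x))"
      by (rule sum.cong[OF refl]) (use k x off_index_less(2)[where K=K and a=a and b=b] d in \<open>auto simp: contr_row_eq_contr_col\<close>)
    finally show "(\<Sum>j<d. ?N j k x * ?H k j x)
      = (\<Sum>l<b k. sesq (b k) (entries (\<delta> k)) (contr_row v w d a b k x l x) (contr_row v w d a b k x l x))" .
  qed
  finally show ?thesis .
qed

lemma Dmax_sep_bound:
  assumes A: "\<forall>k<K. \<delta> k \<in> states (b k)" and d: "d = off a b K" and \<psi>: "\<psi> \<in> pure_states (d*d)"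
  shows "(INF \<sigma>\<in>sep_states d d. Dmax (id_tensor d d (blockP K a b \<delta>) \<psi>) \<sigma>)
     \<le> ereal (log 2 (real (Max (a ` {..<K}))))"
proof -
  obtain v where v: "\<psi> = outer (d*d) v" "(\<Sum>i<d*d. (cmod (v $ i))\<^sup>2) = 1"
    using pure_statesE[OF \<psi>] by blast
  note DF = block_states_props[OF A]
  have psdk: "\<And>k. k<K \<Longrightarrow> psd_kernel (b k) (entries (\<delta> k))" using DF(5) by blast
  have dpos: "0 < off a b K" using v(2) d by (cases "off a b K") auto
  define c where "c = real (Max (a ` {..<K}))"
  have c0: "0 < c" and ca: "\<And>k. k<K \<Longrightarrow> real (a k) \<le> c"
    using Max_block_dims[OF dpos] unfolding c_def by auto
  define \<sigma> where "\<sigma> = sep_witness K a b \<delta> v d"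
  have \<sigma>S: "\<sigma> \<in> sep_states d d" unfolding \<sigma>_def by (rule sep_witness_sep_states[OF A d v(2)])
  let ?T = "id_tensor d d (blockP K a b \<delta>) \<psi>"
  let ?s = "\<lambda>k u. sesq (b k) (entries (\<delta> k)) u u"
  have \<sigma>_form: "sesq (d*d) (entries \<sigma>) w w = (\<Sum>k<K. \<Sum>x<a k. \<Sum>l<b k. ?s k (contr_row v w d a b k x l x))" for w
    unfolding \<sigma>_def by (rule sesq_sep_witness[OF DF(1) d])
  have "Dmax ?T \<sigma> \<le> ereal (log 2 c)"
  proof (rule Dmax_le_log_of_sesq_le[OF c0])
    show "dim_row ?T = d*d" by (simp add: id_tensor_def)
    fix w
    show "Im (sesq (d*d) (entries \<sigma>) w w) = 0"
      unfolding \<sigma>_form Im_sum using psdk psd_kernel_def by simp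
    show "Im (sesq (d*d) (entries ?T) w w) = 0"
      unfolding v(1) by (rule Im_sesq_id_tensor_pure[OF A d])
    have "Re (sesq (d*d) (entries ?T) w w)
        \<le> (\<Sum>k<K. real (a k) * (\<Sum>l<b k. \<Sum>x<a k. Re (?s k (contr_row v w d a b k x l x))))"
      unfolding v(1) by (rule Re_sesq_id_tensor_pure_le_rows[OF A d])
    also have "\<dots> \<le> (\<Sum>k<K. c * (\<Sum>l<b k. \<Sum>x<a k. Re (?s k (contr_row v w d a b k x l x))))"
      using psd_kernel_sesq_nonneg[OF psdk] ca by (intro sum_mono mult_right_mono sum_nonneg) auto
    also have "\<dots> = c * Re (sesq (d*d) (entries \<sigma>) w w)"
      unfolding \<sigma>_form Re_sum sum_distrib_left[symmetric]
      by (rule arg_cong[where f="(*) c"], rule sum.cong[OF refl], rule sum.swap)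
    finally show "Re (sesq (d*d) (entries ?T) w w) \<le> c * Re (sesq (d*d) (entries \<sigma>) w w)" .
  qed
  thus ?thesis unfolding c_def[symmetric] by (rule INF_lower2[OF \<sigma>S])
qed

theorem mainTheorem10:
  fixes K :: nat and a b :: "nat \<Rightarrow> nat" and \<delta> :: "nat \<Rightarrow> complex mat"
  assumes "\<forall>k<K. \<delta> k \<in> states (b k) \<and> pd (b k) (\<delta> k)"
  defines "d \<equiv> off a b K" and "P \<equiv> blockP K a b \<delta>"
  shows "(SUP \<psi>\<in>pure_states (d * d). INF \<sigma>\<in>states d.
            Dmax (id_tensor d d P \<psi>) (kron (1\<^sub>m d) \<sigma>))
           \<le> ereal (log 2 (real (Max (a ` {..<K}))))
       \<and> (SUP (nM, \<rho>)\<in>cq_states d. INF \<sigma>\<in>states d.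
            Dmax (id_tensor nM d P \<rho>) (kron (ptrace2 nM d \<rho>) \<sigma>))
           \<le> ereal (log 2 (\<Sum>k<K. real (a k)))
       \<and> (SUP \<psi>\<in>pure_states (d * d). INF \<sigma>\<in>states d.
            Dmax (id_tensor d d P \<psi>) (kron (ptrace2 d d \<psi>) \<sigma>))
           \<le> ereal (log 2 (\<Sum>k<K. (real (a k))\<^sup>2))
       \<and> (SUP \<psi>\<in>pure_states (d * d). INF \<sigma>\<in>sep_states d d.
            Dmax (id_tensor d d P \<psi>) \<sigma>)
           \<le> ereal (log 2 (real (Max (a ` {..<K}))))"
proof -
  have \<delta>: "\<forall>k<K. \<delta> k \<in> states (b k)" using assms(1) by blast
  have d: "d = off a b K" unfolding d_def ..
  show ?thesis
    unfolding P_def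
    using Dmax_identity_bound[OF \<delta> d] Dmax_cq_bound[OF \<delta> d]
      Dmax_marginal_bound[OF \<delta> d] Dmax_sep_bound[OF \<delta> d]
    by (auto intro!: SUP_least)
qed

end
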